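(* Let $(X_1,Y_1),(X_2,Y_2),\dots$ be a random sample (i.i.d. copies) of a random vector $(X,Y)$ with continuous joint distribution function and (unique) copula $A$, and assume that $A$ allows a continuous Markov kernel $K_A$. Let $E_n$ be the empirical copula of $(X_1,Y_1),\dots,(X_n,Y_n)$ and set $N(n):=\lfloor n^s\rfloor$ for some $s\in(0,\tfrac12)$. Then, almost surely, $$\lim_{n\to\infty}\sup_{(x,y)\in[0,1]^2}\left|K_{\mathcal{B}_{N(n)}(E_n)}(x,[0,y])-K_A(x,[0,y])\right|=0,$$ i.e. $(\mathcal{B}_{N(n)}(E_n))_{n\in\mathbb{N}}$ converges uniformly conditional to $A$ almost surely.
   Context: A (bivariate) copula is a distribution function on $[0,1]^2$ with uniform marginals; each copula $B$ corresponds to a doubly stochastic measure $\mu_B$ with $B(x,y)=\mu_B([0,x]\times[0,y])$. A Markov kernel of $B$ is a map $K_B:[0,1]\times\mathcal{B}([0,1])\to[0,1]$, measurable in the first argument, a probability measure in the second, with $\int_{E_1}K_B(x,E_2)\,d\lambda(x)=\mu_B(E_1\times E_2)$ for all Borel $E_1,E_2$ ($\lambda$ = Lebesgue measure). $A$ allows a continuous Markov kernel if it has a version $K_A$ with $(x,y)\mapsto K_A(x,[0,y])$ continuous on $[0,1]^2$; $K_A$ denotes this version. Bernstein approximation: $p_{N,k}(u)=\binom Nk u^k(1-u)^{N-k}$ for $k\in\{0,\dots,N\}$ and $p_{N,k}\equiv0$ otherwise; for a copula $B$, $\mathcal{B}_N(B)(x,y)=\sum_{i,j=1}^N B(\tfrac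 iN,\tfrac jN)p_{N,i}(x)p_{N,j}(y)$, with Markov kernel version $K_{\mathcal{B}_N(B)}(x,[0,y])=N\sum_{i,j=1}^N B(\tfrac iN,\tfrac jN)\big(p_{N-1,i-1}(x)-p_{N-1,i}(x)\big)p_{N,j}(y)$. Empirical copula: with $F_n,G_n,H_n$ the empirical marginal and bivariate distribution functions of the first $n$ observations, almost surely there is a unique subcopula $E_n'$ on $\{0,\tfrac1n,\dots,1\}^2$ with $H_n(x,y)=E_n'(F_n(x),G_n(y))$, and $E_n$ is its extension to a copula by bilinear interpolation on each square $[\tfrac{i-1}n,\tfrac in]\times[\tfrac{j-1}n,\tfrac jn]$. *)

theory Defs
  imports "HOL-Probability.Probability"
begin

text \<open>Copulas as functions on the unit square (values outside [0,1]^2 irrelevant).\<close>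
definition is_copula :: "(real \<Rightarrow> real \<Rightarrow> real) \<Rightarrow> bool" where
  "is_copula C \<longleftrightarrow>
     (\<forall>u\<in>{0..1}. C u 0 = 0 \<and> C 0 u = 0 \<and> C u 1 = u \<and> C 1 u = u) \<and>
     (\<forall>u1 u2 v1 v2. 0 \<le> u1 \<and> u1 \<le> u2 \<and> u2 \<le> 1 \<and> 0 \<le> v1 \<and> v1 \<le> v2 \<and> v2 \<le> 1 \<longrightarrow>
        C u2 v2 - C u1 v2 - C u2 v1 + C u1 v1 \<ge> 0)"

text \<open>k x y plays the role of K(x,[0,y]) for a Markov kernel K of the copula C whose
  map (x,y) \<mapsto> K(x,[0,y]) is continuous on [0,1]^2: for each x, y \<mapsto> k x y is the
  distribution function of a probability measure on [0,1], and the kernel property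
  \<integral>_{[0,x]} K(t,[0,y]) dt = C(x,y) holds (which determines \<mu>_C on all Borel rectangles).\<close>
definition cont_markov_kernel :: "(real \<Rightarrow> real \<Rightarrow> real) \<Rightarrow> (real \<Rightarrow> real \<Rightarrow> real) \<Rightarrow> bool" where
  "cont_markov_kernel C k \<longleftrightarrow>
     continuous_on ({0..1} \<times> {0..1}) (\<lambda>(x,y). k x y) \<and>
     (\<forall>x\<in>{0..1}. mono_on {0..1} (k x) \<and> k x 1 = 1 \<and> (\<forall>y\<in>{0..1}. 0 \<le> k x y)) \<and>
     (\<forall>x\<in>{0..1}. \<forall>y\<in>{0..1}. (LBINT t:{0..x}. k t y) = C x y)"

definition allows_cont_markov_kernel :: "(real \<Rightarrow> real \<Rightarrow> real) \<Rightarrow> bool" where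
  "allows_cont_markov_kernel C \<longleftrightarrow> (\<exists>k. cont_markov_kernel C k)"

definition bern :: "nat \<Rightarrow> nat \<Rightarrow> real \<Rightarrow> real" where
  "bern N k u = (if k \<le> N then real (N choose k) * u ^ k * (1 - u) ^ (N - k) else 0)"

text \<open>K_{B_N(B)}(x,[0,y]).\<close>
definition bernstein_kernel :: "nat \<Rightarrow> (real \<Rightarrow> real \<Rightarrow> real) \<Rightarrow> real \<Rightarrow> real \<Rightarrow> real" where
  "bernstein_kernel N B x y = real N * (\<Sum>i=1..N. \<Sum>j=1..N.
      B (real i / real N) (real j / real N) *
      (bern (N - 1) (i - 1) x - bern (N - 1) i x) * bern N j y)"

definition emp_df :: "nat \<Rightarrow> (nat \<Rightarrow> real) \<Rightarrow> real \<Rightarrow> real" where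
  "emp_df n Z z = real (card {k. k < n \<and> Z k \<le> z}) / real n"

definition emp_joint_df :: "nat \<Rightarrow> (nat \<Rightarrow> real) \<Rightarrow> (nat \<Rightarrow> real) \<Rightarrow> real \<Rightarrow> real \<Rightarrow> real" where
  "emp_joint_df n Xs Ys x y = real (card {k. k < n \<and> Xs k \<le> x \<and> Ys k \<le> y}) / real n"

definition grid :: "nat \<Rightarrow> real set" where
  "grid n = {real i / real n | i. i \<le> n}"

text \<open>The (a.s. unique) subcopula E_n' on the grid with H_n(x,y) = E_n'(F_n x, G_n y);
  set to 0 off the grid.\<close>
definition emp_subcopula :: "nat \<Rightarrow> (nat \<Rightarrow> real) \<Rightarrow> (nat \<Rightarrow> real) \<Rightarrow> real \<Rightarrow> real \<Rightarrow> real" where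
  "emp_subcopula n Xs Ys = (THE S.
      (\<forall>x y. emp_joint_df n Xs Ys x y = S (emp_df n Xs x) (emp_df n Ys y)) \<and>
      (\<forall>u v. (u,v) \<notin> grid n \<times> grid n \<longrightarrow> S u v = 0))"

text \<open>Empirical copula: bilinear interpolation of E_n' on the squares
  [(i-1)/n,i/n] x [(j-1)/n,j/n].\<close>
definition emp_copula :: "nat \<Rightarrow> (nat \<Rightarrow> real) \<Rightarrow> (nat \<Rightarrow> real) \<Rightarrow> real \<Rightarrow> real \<Rightarrow> real" where
  "emp_copula n Xs Ys u v =
     (let S = emp_subcopula n Xs Ys;
          i = min (n - 1) (nat \<lfloor>real n * u\<rfloor>);
          j = min (n - 1) (nat \<lfloor>real n * v\<rfloor>);
          a = real n * u - real i;
          b = real n * v - real j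
      in (1 - a) * (1 - b) * S (real i / real n) (real j / real n)
         + a * (1 - b) * S (real (i + 1) / real n) (real j / real n)
         + (1 - a) * b * S (real i / real n) (real (j + 1) / real n)
         + a * b * S (real (i + 1) / real n) (real (j + 1) / real n))"

end

theory Submission
  imports Defs "HOL-Real_Asymp.Real_Asymp"
begin

(* The kernel of B_N(E_n) differs from that of B_N(A) by at most 2N times the largest error
   |E_n - A| on the grid, and the kernel of B_N(A) converges uniformly to K_A: summation by parts
   writes it as a Bernstein average of difference quotients N (A((i+1)/N, j/N) - A(i/N, j/N)),
   which equal values K_A(xi, j/N) by the mean value theorem, and Bernstein weights concentrate
   while K_A is uniformly continuous.
   Hoeffding's inequality on the (n+1)^2 rectangles spanned by the 1/n-quantiles of X and Y,
   together with Borel-Cantelli, shows that almost surely the empirical distribution functions are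
   eventually within n^(-s') + 2/n of the true ones, for any s' < 1/2.  As there are almost surely
   no ties, E_n is then uniformly within O(n^(-s')) of A, and s < s' makes N(n) n^(-s') vanish. *)

section \<open>Copulas and continuous Markov kernels\<close>

lemma is_copula_transpose:
  assumes "is_copula A"
  shows "is_copula (\<lambda>u v. A v u)"
  using assms unfolding is_copula_def by (smt (verit))

lemma copula_increment_fst:
  assumes "is_copula A" "0 \<le> a" "a \<le> b" "b \<le> 1" "v \<in> {0..1}"
  shows "0 \<le> A b v - A a v" "A b v - A a v \<le> b - a"
proof -
  have "A a 0 = 0" "A b 0 = 0" "A a 1 = a" "A b 1 = b"
    and rect: "\<And>v1 v2. 0 \<le> v1 \<Longrightarrow> v1 \<le> v2 \<Longrightarrow> v2 \<le> 1 \<Longrightarrow> A b v2 - A a v2 - A b v1 + A a v1 \<ge> 0"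
    using assms unfolding is_copula_def by auto
  then show "0 \<le> A b v - A a v" "A b v - A a v \<le> b - a"
    using rect[of 0 v] rect[of v 1] assms(5) by auto
qed

lemma copula_lipschitz_fst:
  assumes "is_copula A" "u \<in> {0..1}" "u' \<in> {0..1}" "v \<in> {0..1}"
  shows "\<bar>A u v - A u' v\<bar> \<le> \<bar>u - u'\<bar>"
  using copula_increment_fst[OF assms(1) _ _ _ assms(4), of u u']
    copula_increment_fst[OF assms(1) _ _ _ assms(4), of u' u] assms(2,3)
  by (cases "u \<le> u'") auto

lemma copula_lipschitz:
  assumes "is_copula A" "u \<in> {0..1}" "u' \<in> {0..1}" "v \<in> {0..1}" "v' \<in> {0..1}"
  shows "\<bar>A u v - A u' v'\<bar> \<le> \<bar>u - u'\<bar> + \<bar>v - v'\<bar>"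
  using copula_lipschitz_fst[OF assms(1-4)]
    copula_lipschitz_fst[OF is_copula_transpose[OF assms(1)] assms(4,5,3)]
  by linarith

lemma cont_markov_kernel_bounds:
  assumes "cont_markov_kernel A K" "x \<in> {0..1}" "y \<in> {0..1}"
  shows "0 \<le> K x y" "K x y \<le> 1"
proof -
  have "mono_on {0..1} (K x)" "K x 1 = 1" "0 \<le> K x y"
    using assms unfolding cont_markov_kernel_def by auto
  then show "0 \<le> K x y" "K x y \<le> 1"
    using mono_onD[of "{0..1}" "K x" y 1] assms(3) by auto
qed

lemma cont_markov_kernel_continuous_on_fst:
  assumes "cont_markov_kernel A K" "v \<in> {0..1}"
  shows "continuous_on {0..1} (\<lambda>t. K t v)"
proof -
  have "continuous_on ({0..1} \<times> {0..1}) (\<lambda>(x,y). K x y)"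
    using assms unfolding cont_markov_kernel_def by auto
  then have "continuous_on {0..1} (\<lambda>t. (\<lambda>(x,y). K x y) (t, v))"
    by (rule continuous_on_compose2) (use assms(2) in \<open>auto intro!: continuous_intros\<close>)
  then show ?thesis by simp
qed

lemma copula_eq_integral_kernel:
  assumes "cont_markov_kernel A K" "u \<in> {0..1}" "v \<in> {0..1}"
  shows "A u v = integral {0..u} (\<lambda>t. K t v)"
proof -
  have "continuous_on {0..u} (\<lambda>t. K t v)"
    using cont_markov_kernel_continuous_on_fst[OF assms(1,3)]
    by (rule continuous_on_subset) (use assms(2) in auto)
  then have "(LBINT t:{0..u}. K t v) = integral {0..u} (\<lambda>t. K t v)"
    by (rule set_borel_integral_eq_integral(2)[OF borel_integrable_atLeastAtMost'])
  moreover have "(LBINT t:{0..u}. K t v) = A u v"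
    using assms unfolding cont_markov_kernel_def by auto
  ultimately show ?thesis by simp
qed

lemma copula_increment_eq_kernel:
  assumes K: "cont_markov_kernel A K" and ab: "0 \<le> a" "a < b" "b \<le> 1" and v: "v \<in> {0..1}"
  obtains \<xi> where "a \<le> \<xi>" "\<xi> \<le> b" "A b v - A a v = (b - a) * K \<xi> v"
proof -
  define g where "g u = integral {0..u} (\<lambda>t. K t v)" for u
  have deriv: "(g has_real_derivative K t v) (at t within {0..1})" if "t \<in> {0..1}" for t
    unfolding g_def
    by (rule integral_has_real_derivative[OF cont_markov_kernel_continuous_on_fst[OF K v] that])
  have "continuous_on {0..1} g"
    unfolding continuous_on_eq_continuous_within using deriv DERIV_continuous by blast
  then have "continuous_on {a..b} g" by (rule continuous_on_subset) (use ab in auto)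
  moreover have deriv_at: "(g has_real_derivative K t v) (at t)" if "a < t" "t < b" for t
    using deriv[of t] that ab at_within_Icc_at[of 0 t 1] by auto
  ultimately obtain l z where z: "a < z" "z < b" "DERIV g z :> l" "g b - g a = (b - a) * l"
    using MVT[OF ab(2)] by (metis real_differentiable_def)
  have "l = K z v" using DERIV_unique[OF z(3) deriv_at[OF z(1,2)]] .
  moreover have "A b v = g b" "A a v = g a"
    using copula_eq_integral_kernel[OF K _ v] ab by (auto simp: g_def)
  ultimately show ?thesis using z that[of z] by auto
qed

definition quadratic_modulus :: "(real \<Rightarrow> real \<Rightarrow> real) \<Rightarrow> real \<Rightarrow> real \<Rightarrow> bool" where
  "quadratic_modulus K e C \<longleftrightarrow> (\<forall>x\<in>{0..1}. \<forall>y\<in>{0..1}. \<forall>x'\<in>{0..1}. \<forall>y'\<in>{0..1}.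
     \<bar>K x' y' - K x y\<bar> \<le> e + C * ((x' - x)\<^sup>2 + (y' - y)\<^sup>2))"

lemma cont_markov_kernel_modulus:
  assumes K: "cont_markov_kernel A K" and e: "e > 0"
  obtains C where "C \<ge> 0" "quadratic_modulus K e C"
proof -
  have "continuous_on ({0..1} \<times> {0..1}) (\<lambda>(x,y). K x y)"
    using K unfolding cont_markov_kernel_def by auto
  then have "uniformly_continuous_on ({0..1::real} \<times> {0..1::real}) (\<lambda>(x,y). K x y)"
    by (intro compact_uniformly_continuous compact_Times) auto
  then obtain d where d: "d > 0" and
    unif: "\<And>p p'. p \<in> {0..1} \<times> {0..1} \<Longrightarrow> p' \<in> {0..1} \<times> {0..1} \<Longrightarrow> dist p' p < d \<Longrightarrow>
            dist ((\<lambda>(x,y). K x y) p') ((\<lambda>(x,y). K x y) p) < e"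
    unfolding uniformly_continuous_on_def using e by metis
  have "quadratic_modulus K e (1 / d\<^sup>2)"
    unfolding quadratic_modulus_def
  proof (intro ballI)
    fix x y x' y' :: real assume xy: "x \<in> {0..1}" "y \<in> {0..1}" "x' \<in> {0..1}" "y' \<in> {0..1}"
    have dist_sq: "(dist (x', y') (x, y))\<^sup>2 = (x' - x)\<^sup>2 + (y' - y)\<^sup>2"
      by (simp add: dist_Pair_Pair dist_real_def)
    show "\<bar>K x' y' - K x y\<bar> \<le> e + 1 / d\<^sup>2 * ((x' - x)\<^sup>2 + (y' - y)\<^sup>2)"
    proof (cases "dist (x', y') (x, y) < d")
      case True
      then have "\<bar>K x' y' - K x y\<bar> < e" using unif[of "(x,y)" "(x',y')"] xy by (auto simp: dist_real_def)
      then show ?thesis by (simp add: add_increasing2)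
    next
      case False
      \<comment> \<open>far apart points: the quadratic term alone exceeds the oscillation bound 1\<close>
      then have "d\<^sup>2 \<le> (x' - x)\<^sup>2 + (y' - y)\<^sup>2"
        unfolding dist_sq[symmetric] using d by (intro power_mono) auto
      then have "1 \<le> 1 / d\<^sup>2 * ((x' - x)\<^sup>2 + (y' - y)\<^sup>2)" using d by (simp add: field_simps)
      moreover have "\<bar>K x' y' - K x y\<bar> \<le> 1"
        using cont_markov_kernel_bounds[OF K] xy by (smt (verit))
      ultimately show ?thesis using e by linarith
    qed
  qed
  then show ?thesis using that[of "1 / d\<^sup>2"] by simp
qed

section \<open>Bernstein approximation of the Markov kernel\<close>

lemma bern_eq_Bernstein: "k \<le> N \<Longrightarrow> bern N k x = Bernstein N k x"
  by (simp add: bern_def Bernstein_def)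

lemma bern_nonneg: "x \<in> {0..1} \<Longrightarrow> 0 \<le> bern N k x"
  by (simp add: bern_def)

lemma sum_bern: "(\<Sum>k\<le>N. bern N k x) = 1"
  using sum_Bernstein[of N x] by (simp add: bern_eq_Bernstein)

lemma sum_bern_le_1:
  assumes "finite S" "x \<in> {0..1}"
  shows "(\<Sum>k\<in>S. bern N k x) \<le> 1"
proof -
  have "(\<Sum>k\<in>S. bern N k x) = (\<Sum>k\<in>S \<inter> {..N}. bern N k x)"
    by (rule sum.mono_neutral_right) (auto simp: assms bern_def)
  also have "\<dots> \<le> (\<Sum>k\<le>N. bern N k x)"
    by (rule sum_mono2) (auto intro: bern_nonneg[OF assms(2)])
  finally show ?thesis by (simp add: sum_bern)
qed

lemma bern_second_moment:
  assumes "n \<ge> 1"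
  shows "(\<Sum>k\<le>n. (x - real k / real n)\<^sup>2 * bern n k x) = x * (1 - x) / real n"
proof -
  have sq: "\<And>a b x::real. (a - b)\<^sup>2 * x = a * (a - 1) * x + (1 - 2 * b) * a * x + b * b * x"
    by (simp add: algebra_simps power2_eq_square)
  have "(\<Sum>k\<le>n. (k - n * x)\<^sup>2 * Bernstein n k x) = n * x * (1 - x)"
    by (simp add: sq sum.distrib, simp flip: sum_distrib_left add: mult.assoc,
        simp add: algebra_simps power2_eq_square)
  then have "(\<Sum>k\<le>n. (k - n * x)\<^sup>2 * Bernstein n k x) / n\<^sup>2 = x * (1 - x) / n"
    by (simp add: power2_eq_square)
  then have "(\<Sum>k\<le>n. (x - k/n)\<^sup>2 * Bernstein n k x) = x * (1 - x) / n"
    using assms by (simp add: sum_divide_distrib field_split_simps power2_commute)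
  then show ?thesis by (simp add: bern_eq_Bernstein)
qed

lemma bernstein_kernel_diff:
  "bernstein_kernel N B x y - bernstein_kernel N A x y = bernstein_kernel N (\<lambda>u v. B u v - A u v) x y"
  unfolding bernstein_kernel_def right_diff_distrib[symmetric] sum_subtractf[symmetric]
  by (simp add: left_diff_distrib)

lemma abs_bernstein_kernel_le:
  assumes x: "x \<in> {0..1}" and y: "y \<in> {0..1}"
    and grid: "\<And>i j. i \<in> {1..N} \<Longrightarrow> j \<in> {1..N} \<Longrightarrow> \<bar>B (real i / real N) (real j / real N)\<bar> \<le> \<delta>"
    and "\<delta> \<ge> 0"
  shows "\<bar>bernstein_kernel N B x y\<bar> \<le> 2 * real N * \<delta>"
proof -
  define q where "q i = bern (N - 1) i x" for i
  define p where "p j = bern N j y" for j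
  have q: "q i \<ge> 0" for i using x by (simp add: q_def bern_nonneg)
  have p: "p j \<ge> 0" for j using y by (simp add: p_def bern_nonneg)
  have q_diff: "\<bar>q (i - 1) - q i\<bar> \<le> q (i - 1) + q i" for i
    using q[of i] q[of "i - 1"] by linarith
  have "\<bar>\<Sum>i=1..N. \<Sum>j=1..N. B (real i / real N) (real j / real N) * (q (i - 1) - q i) * p j\<bar>
      \<le> (\<Sum>i=1..N. \<Sum>j=1..N. \<bar>B (real i / real N) (real j / real N) * (q (i - 1) - q i) * p j\<bar>)"
    (is "\<bar>?S\<bar> \<le> _") by (rule order_trans[OF sum_abs sum_mono[OF sum_abs]])
  also have "\<dots> \<le> (\<Sum>i=1..N. \<Sum>j=1..N. \<delta> * (q (i - 1) + q i) * p j)"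
    using grid q_diff p \<open>\<delta> \<ge> 0\<close>
    by (intro sum_mono) (auto simp: abs_mult intro!: mult_mono mult_right_mono)
  also have "\<dots> = \<delta> * ((\<Sum>i<N. q i) + (\<Sum>i=1..N. q i)) * (\<Sum>j=1..N. p j)"
  proof -
    have "(\<Sum>i=1..N. q (i - 1) + q i) = (\<Sum>i<N. q i) + (\<Sum>i=1..N. q i)"
      by (simp add: sum.distrib sum.atLeast1_atMost_eq)
    then show ?thesis by (simp flip: sum_distrib_left sum_distrib_right add: mult_ac)
  qed
  also have "\<dots> \<le> \<delta> * 2 * 1"
  proof (intro mult_mono mult_left_mono)
    show "(\<Sum>i<N. q i) + (\<Sum>i=1..N. q i) \<le> 2"
      using sum_bern_le_1[OF _ x, of "{..<N}" "N - 1"] sum_bern_le_1[OF _ x, of "{1..N}" "N - 1"]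
      by (simp add: q_def)
    show "(\<Sum>j=1..N. p j) \<le> 1"
      using sum_bern_le_1[OF _ y, of "{1..N}" N] by (simp add: p_def)
  qed (use \<open>\<delta> \<ge> 0\<close> in \<open>auto intro!: sum_nonneg add_nonneg_nonneg p q\<close>)
  finally have "real N * \<bar>?S\<bar> \<le> real N * (2 * \<delta>)" by (intro mult_left_mono) auto
  then show ?thesis unfolding bernstein_kernel_def q_def p_def by (simp add: abs_mult mult_ac)
qed

lemma summation_by_parts_nat:
  fixes a q :: "nat \<Rightarrow> real"
  assumes "a 0 = 0"
  shows "(\<Sum>i=1..N. a i * (q (i - 1) - q i)) = (\<Sum>i<N. (a (Suc i) - a i) * q i) - a N * q N"
  by (induction N) (auto simp: assms atLeastAtMostSuc_conv algebra_simps)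

lemma bernstein_kernel_eq_difference_quotients:
  assumes A: "is_copula A" and N: "N \<ge> 1"
  shows "bernstein_kernel N A x y = (\<Sum>i\<le>N - 1. \<Sum>j\<le>N.
      real N * (A (real (Suc i) / real N) (real j / real N) - A (real i / real N) (real j / real N))
      * (bern (N - 1) i x * bern N j y))"
proof -
  have A0: "A u 0 = 0" "A 0 u = 0" if "u \<in> {0..1}" for u
    using A that unfolding is_copula_def by auto
  define q where "q i = bern (N - 1) i x" for i
  define p where "p j = bern N j y" for j
  define f where "f i = (\<Sum>j\<le>N. A (real i / real N) (real j / real N) * p j)" for i
  have f_eq: "f i = (\<Sum>j=1..N. A (real i / real N) (real j / real N) * p j)" if "i \<le> N" for i
    unfolding f_def using that A0 N by (simp add: sum.atMost_shift sum.atLeast1_atMost_eq)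
  have "bernstein_kernel N A x y = real N * (\<Sum>i=1..N. f i * (q (i - 1) - q i))"
    unfolding bernstein_kernel_def q_def
    by (simp add: f_eq p_def sum_distrib_left sum_distrib_right mult_ac)
  also have "(\<Sum>i=1..N. f i * (q (i - 1) - q i)) = (\<Sum>i<N. (f (Suc i) - f i) * q i)"
    using summation_by_parts_nat[of f q N] A0 N
    by (simp add: f_def q_def bern_def)
  also have "{..<N} = {..N - 1}" using N by auto
  finally show ?thesis
    by (simp add: f_def q_def p_def sum_distrib_left sum_distrib_right sum_subtractf[symmetric]
        algebra_simps)
qed

lemma difference_quotient_near_kernel:
  assumes A: "is_copula A" and K: "cont_markov_kernel A K" and "C \<ge> 0"
    and modulus: "quadratic_modulus K e C"
    and N: "N \<ge> 2" and i: "i < N" and j: "j \<le> N" and x: "x \<in> {0..1}" and y: "y \<in> {0..1}"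
  shows "\<bar>real N * (A (real (Suc i) / real N) (real j / real N) - A (real i / real N) (real j / real N))
           - K x y\<bar>
    \<le> e + 2 * C / (real N)\<^sup>2 + 2 * C * (x - real i / real (N - 1))\<^sup>2 + C * (y - real j / real N)\<^sup>2"
proof -
  have N_pos: "real N > 0" using N by simp
  have cell: "0 \<le> real i / real N" "real i / real N < real (Suc i) / real N" "real (Suc i) / real N \<le> 1"
    using i N_pos by (auto simp: divide_strict_right_mono)
  have v: "real j / real N \<in> {0..1}" using j N_pos by auto
  obtain \<xi> where \<xi>: "real i / real N \<le> \<xi>" "\<xi> \<le> real (Suc i) / real N"
    and incr: "A (real (Suc i) / real N) (real j / real N) - A (real i / real N) (real j / real N)
             = (real (Suc i) / real N - real i / real N) * K \<xi> (real j / real N)"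
    using copula_increment_eq_kernel[OF K cell v] by blast
  have D_eq: "real N * (A (real (Suc i) / real N) (real j / real N) - A (real i / real N) (real j / real N))
      = K \<xi> (real j / real N)"
    unfolding incr using N_pos by (simp add: field_simps)
  have \<xi>_01: "\<xi> \<in> {0..1}"
    using order_trans[OF cell(1) \<xi>(1)] order_trans[OF \<xi>(2) cell(3)] by simp
  define c where "c = real i / real (N - 1)"
  \<comment> \<open>the Bernstein node \<open>c = i/(N-1)\<close> lies in the same cell \<open>[i/N, (i+1)/N]\<close> as \<open>\<xi>\<close>\<close>
  have "real i / real N \<le> c" "c \<le> real (Suc i) / real N"
    using i N by (auto simp: c_def field_simps of_nat_diff)
  then have "\<bar>\<xi> - c\<bar> \<le> 1 / real N" using \<xi> by (simp add: add_divide_distrib abs_le_iff)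
  then have "(\<xi> - c)\<^sup>2 \<le> (1 / real N)\<^sup>2"
    by (metis abs_ge_zero power2_abs power_mono)
  moreover have "(\<xi> - x)\<^sup>2 \<le> 2 * (\<xi> - c)\<^sup>2 + 2 * (x - c)\<^sup>2"
    using zero_le_power2[of "\<xi> + x - 2 * c"] by (simp add: power2_eq_square algebra_simps)
  ultimately have \<xi>_x: "(\<xi> - x)\<^sup>2 \<le> 2 / (real N)\<^sup>2 + 2 * (x - real i / real (N - 1))\<^sup>2"
    by (simp add: c_def power_divide)
  have "\<bar>K \<xi> (real j / real N) - K x y\<bar> \<le> e + C * ((\<xi> - x)\<^sup>2 + (real j / real N - y)\<^sup>2)"
    using modulus x y \<xi>_01 v unfolding quadratic_modulus_def by blast
  also have "\<dots> \<le> e + C * (2 / (real N)\<^sup>2 + 2 * (x - real i / real (N - 1))\<^sup>2 + (y - real j / real N)\<^sup>2)"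
    using \<xi>_x \<open>C \<ge> 0\<close> by (intro add_left_mono mult_left_mono) (auto simp: power2_commute)
  finally show ?thesis unfolding D_eq by (simp add: algebra_simps)
qed

lemma bernstein_kernel_dist_kernel_le:
  assumes A: "is_copula A" and K: "cont_markov_kernel A K" and C: "C \<ge> 0"
    and modulus: "quadratic_modulus K e C"
    and N: "N \<ge> 2" and x: "x \<in> {0..1}" and y: "y \<in> {0..1}"
  shows "\<bar>bernstein_kernel N A x y - K x y\<bar> \<le> e + 5 * C / real (N - 1)"
proof -
  define M where "M = N - 1"
  define q where "q i = bern M i x" for i
  define p where "p j = bern N j y" for j
  define D where "D i j = real N * (A (real (Suc i) / real N) (real j / real N)
                                     - A (real i / real N) (real j / real N))" for i j
  have M: "M \<ge> 1" "real M \<le> real N" using N by (auto simp: M_def)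
  have q: "q i \<ge> 0" for i using x by (simp add: q_def bern_nonneg)
  have p: "p j \<ge> 0" for j using y by (simp add: p_def bern_nonneg)
  have average: "(\<Sum>i\<le>M. \<Sum>j\<le>N. (\<alpha> + \<beta> i + \<gamma> j) * (q i * p j))
      = \<alpha> + (\<Sum>i\<le>M. \<beta> i * q i) + (\<Sum>j\<le>N. \<gamma> j * p j)" for \<alpha> and \<beta> \<gamma> :: "nat \<Rightarrow> real"
  proof -
    have "(\<Sum>i\<le>M. \<Sum>j\<le>N. (\<alpha> + \<beta> i + \<gamma> j) * (q i * p j))
        = (\<Sum>i\<le>M. \<Sum>j\<le>N. \<alpha> * (q i * p j)) + (\<Sum>i\<le>M. \<Sum>j\<le>N. (\<beta> i * q i) * p j)
          + (\<Sum>i\<le>M. \<Sum>j\<le>N. q i * (\<gamma> j * p j))"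
      by (simp add: sum.distrib algebra_simps)
    also have "\<dots> = \<alpha> * ((\<Sum>i\<le>M. q i) * (\<Sum>j\<le>N. p j)) + (\<Sum>i\<le>M. \<beta> i * q i) * (\<Sum>j\<le>N. p j)
          + (\<Sum>i\<le>M. q i) * (\<Sum>j\<le>N. \<gamma> j * p j)"
      unfolding sum_product by (simp add: sum_distrib_left)
    finally show ?thesis using sum_bern[of M x] sum_bern[of N y] by (simp add: q_def p_def)
  qed
  have "\<bar>bernstein_kernel N A x y - K x y\<bar> = \<bar>\<Sum>i\<le>M. \<Sum>j\<le>N. (D i j - K x y) * (q i * p j)\<bar>"
    using average[of "K x y" "\<lambda>_. 0" "\<lambda>_. 0"] N
    by (simp add: bernstein_kernel_eq_difference_quotients[OF A] D_def q_def p_def M_def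
        left_diff_distrib sum_subtractf)
  also have "\<dots> \<le> (\<Sum>i\<le>M. \<Sum>j\<le>N. \<bar>(D i j - K x y) * (q i * p j)\<bar>)"
    by (rule order_trans[OF sum_abs sum_mono[OF sum_abs]])
  also have "\<dots> \<le> (\<Sum>i\<le>M. \<Sum>j\<le>N. (e + 2 * C / (real N)\<^sup>2 + 2 * C * (x - real i / real M)\<^sup>2
                                       + C * (y - real j / real N)\<^sup>2) * (q i * p j))"
    using difference_quotient_near_kernel[OF A K C modulus N _ _ x y] N
    by (intro sum_mono) (auto simp: abs_mult q p D_def M_def intro!: mult_right_mono)
  also have "\<dots> = e + 2 * C / (real N)\<^sup>2 + 2 * C * (x * (1 - x) / real M) + C * (y * (1 - y) / real N)"
    using average bern_second_moment[OF M(1), of x] bern_second_moment[of N y] N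
    by (simp add: q_def p_def mult.assoc flip: sum_distrib_left)
  also have "\<dots> \<le> e + 2 * C / real M + 2 * C / real M + C / real M"
  proof -
    have "M \<le> N * N" unfolding M_def by (rule order_trans[OF diff_le_self le_square])
    then have "2 * C / (real N)\<^sup>2 \<le> 2 * C / real M"
      using M C by (intro divide_left_mono) (auto simp: power2_eq_square simp flip: of_nat_mult)
    moreover have "x * (1 - x) / real M \<le> 1 / real M"
      using x M by (intro divide_right_mono) (auto intro: mult_le_one)
    then have "2 * C * (x * (1 - x) / real M) \<le> 2 * C * (1 / real M)"
      by (rule mult_left_mono) (use C in simp)
    moreover have "y * (1 - y) / real N \<le> 1 / real M"
      using y M by (intro frac_le) (auto intro: mult_le_one)
    then have "C * (y * (1 - y) / real N) \<le> C * (1 / real M)"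
      by (rule mult_left_mono) (use C in simp)
    ultimately show ?thesis by simp
  qed
  finally show ?thesis by (simp add: M_def)
qed

lemma bernstein_kernel_uniform_limit:
  assumes A: "is_copula A" and K: "cont_markov_kernel A K"
  shows "uniform_limit ({0..1} \<times> {0..1}) (\<lambda>N p. bernstein_kernel N A (fst p) (snd p))
           (\<lambda>p. K (fst p) (snd p)) sequentially"
proof (rule uniform_limitI)
  fix e :: real assume e: "e > 0"
  then obtain C where C: "C \<ge> 0" and modulus: "quadratic_modulus K (e / 2) C"
    using cont_markov_kernel_modulus[OF K, of "e / 2"] by auto
  have "\<forall>\<^sub>F N in sequentially. 10 * C / real N < e / 2"
    using lim_const_over_n[of "10 * C"] e by (intro order_tendstoD(2)) auto
  then show "\<forall>\<^sub>F N in sequentially. \<forall>p\<in>{0..1} \<times> {0..1}.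
      dist (bernstein_kernel N A (fst p) (snd p)) (K (fst p) (snd p)) < e"
    using eventually_ge_at_top[of 2]
  proof eventually_elim
    case (elim N)
    have "10 * C / (2 * real (N - 1)) \<le> 10 * C / real N"
      using elim(2) C by (intro divide_left_mono) (auto simp: of_nat_diff)
    then have "5 * C / real (N - 1) \<le> 10 * C / real N" by simp
    then show ?case
      using bernstein_kernel_dist_kernel_le[OF A K C modulus elim(2)] elim(1)
      by (fastforce simp: dist_real_def)
  qed
qed

section \<open>The empirical copula\<close>

lemma emp_df_eq_imp_sublevel_eq:
  assumes "n \<ge> 1" "emp_df n xs x = emp_df n xs x'"
  shows "{k. k < n \<and> xs k \<le> x} = {k. k < n \<and> xs k \<le> x'}"
proof -
  have card_eq: "card {k. k < n \<and> xs k \<le> x} = card {k. k < n \<and> xs k \<le> x'}"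
    using assms by (simp add: emp_df_def)
  show ?thesis
  proof (cases "x \<le> x'")
    case True
    then show ?thesis using card_eq by (intro card_subset_eq) auto
  next
    case False
    then show ?thesis using card_eq by (intro card_subset_eq[symmetric]) auto
  qed
qed

lemma emp_joint_df_eq_if_emp_df_eq:
  assumes "n \<ge> 1" "emp_df n xs x = emp_df n xs x'" "emp_df n ys y = emp_df n ys y'"
  shows "emp_joint_df n xs ys x y = emp_joint_df n xs ys x' y'"
proof -
  have "{k. k < n \<and> xs k \<le> x \<and> ys k \<le> y} = {k. k < n \<and> xs k \<le> x} \<inter> {k. k < n \<and> ys k \<le> y}"
       "{k. k < n \<and> xs k \<le> x' \<and> ys k \<le> y'} = {k. k < n \<and> xs k \<le> x'} \<inter> {k. k < n \<and> ys k \<le> y'}"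
    by auto
  then show ?thesis
    using emp_df_eq_imp_sublevel_eq[OF assms(1,2)] emp_df_eq_imp_sublevel_eq[OF assms(1,3)]
    unfolding emp_joint_df_def by simp
qed

lemma emp_df_in_grid: "emp_df n xs x \<in> grid n"
proof -
  have "card {k. k < n \<and> xs k \<le> x} \<le> n"
    by (rule order_trans[OF card_mono[of "{..<n}"]]) auto
  then show ?thesis unfolding emp_df_def grid_def by blast
qed

lemma exists_count_le_eq:
  fixes xs :: "nat \<Rightarrow> real"
  assumes inj: "inj_on xs {..<n}" and "i \<le> n"
  shows "\<exists>x. card {k. k < n \<and> xs k \<le> x} = i"
  using \<open>i \<le> n\<close>
proof (induction i)
  case 0
  have "xs k > Min (insert 0 (xs ` {..<n})) - 1" if "k < n" for k
  proof -
    have "Min (insert 0 (xs ` {..<n})) \<le> xs k" using that by (intro Min_le) auto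
    then show ?thesis by linarith
  qed
  then have "{k. k < n \<and> xs k \<le> Min (insert 0 (xs ` {..<n})) - 1} = {}" by force
  then show ?case by (metis card.empty)
next
  case (Suc i)
  then obtain x where x: "card {k. k < n \<and> xs k \<le> x} = i" by auto
  define L where "L = {k. k < n \<and> xs k \<le> x}"
  have "card L < card {..<n}" using x Suc.prems by (simp add: L_def)
  then have "L \<noteq> {..<n}" by auto
  then have "Min (xs ` ({..<n} - L)) \<in> xs ` ({..<n} - L)"
    by (intro Min_in) (auto simp: L_def)
  then obtain k0 where k0: "k0 \<in> {..<n} - L" "xs k0 = Min (xs ` ({..<n} - L))"
    by (metis imageE)
  \<comment> \<open>raising the threshold to the smallest value above \<open>x\<close> picks up exactly one new index\<close>
  have "{k. k < n \<and> xs k \<le> xs k0} = insert k0 L"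
  proof (intro equalityI subsetI)
    fix k assume k: "k \<in> {k. k < n \<and> xs k \<le> xs k0}"
    show "k \<in> insert k0 L"
    proof (cases "k \<in> L")
      case False
      then have "xs k0 \<le> xs k" using k k0(2) by simp
      then have "xs k = xs k0" using k by simp
      then show ?thesis using inj_onD[OF inj] k k0(1) by auto
    qed simp
  qed (use k0(1) in \<open>auto simp: L_def\<close>)
  moreover have "card (insert k0 L) = Suc i"
    using k0(1) x by (simp add: L_def)
  ultimately show ?case by (intro exI[of _ "xs k0"]) simp
qed

lemma exists_emp_df_eq:
  assumes "inj_on xs {..<n}" "i \<le> n"
  shows "\<exists>x. emp_df n xs x = real i / real n"
proof -
  obtain x where "card {k. k < n \<and> xs k \<le> x} = i" using exists_count_le_eq[OF assms] by blast
  then show ?thesis unfolding emp_df_def by auto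
qed

text \<open>Without ties the description in the definition of \<open>emp_subcopula\<close> has exactly one
  solution, so the \<open>THE\<close> there is not a junk value.\<close>
lemma emp_joint_df_eq_emp_subcopula:
  assumes n: "n \<ge> 1" and inj: "inj_on xs {..<n}" "inj_on ys {..<n}"
  shows "emp_joint_df n xs ys x y = emp_subcopula n xs ys (emp_df n xs x) (emp_df n ys y)"
proof -
  define P where "P S \<longleftrightarrow> (\<forall>x y. emp_joint_df n xs ys x y = S (emp_df n xs x) (emp_df n ys y)) \<and>
      (\<forall>u v. (u,v) \<notin> grid n \<times> grid n \<longrightarrow> S u v = 0)" for S :: "real \<Rightarrow> real \<Rightarrow> real"
  define S0 where "S0 u v = (if u \<in> grid n \<and> v \<in> grid n then
      emp_joint_df n xs ys (SOME x. emp_df n xs x = u) (SOME y. emp_df n ys y = v) else 0)" for u v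
  have S0: "P S0"
    unfolding P_def
  proof (intro conjI allI impI)
    fix x y
    have "emp_df n xs (SOME x'. emp_df n xs x' = emp_df n xs x) = emp_df n xs x"
         "emp_df n ys (SOME y'. emp_df n ys y' = emp_df n ys y) = emp_df n ys y"
      by (rule someI[of _ x] someI[of _ y], rule refl)+
    from emp_joint_df_eq_if_emp_df_eq[OF n this[symmetric]]
    show "emp_joint_df n xs ys x y = S0 (emp_df n xs x) (emp_df n ys y)"
      unfolding S0_def using emp_df_in_grid by simp
  qed (auto simp: S0_def)
  have unique: "S = S'" if "P S" "P S'" for S S'
  proof (intro ext)
    fix u v
    show "S u v = S' u v"
    proof (cases "u \<in> grid n \<and> v \<in> grid n")
      case True
      then obtain i j where "i \<le> n" "j \<le> n" "u = real i / real n" "v = real j / real n"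
        unfolding grid_def by auto
      then obtain x y where xy: "emp_df n xs x = u" "emp_df n ys y = v"
        using exists_emp_df_eq[OF inj(1)] exists_emp_df_eq[OF inj(2)] by blast
      have "emp_joint_df n xs ys x y = S (emp_df n xs x) (emp_df n ys y)"
        "emp_joint_df n xs ys x y = S' (emp_df n xs x) (emp_df n ys y)"
        using that unfolding P_def by blast+
      then show ?thesis using xy by simp
    next
      case False
      then show ?thesis using that unfolding P_def by simp
    qed
  qed
  have "(THE S. P S) = S0" by (rule the_equality[of P, OF S0 unique[OF _ S0]])
  moreover have "(THE S. P S) = emp_subcopula n xs ys"
    unfolding emp_subcopula_def P_def by (rule refl)
  ultimately have "emp_subcopula n xs ys = S0" by simp
  with S0 show ?thesis unfolding P_def by simp
qed

lemma bilinear_interpolation_dist_le: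
  fixes a b s1 s2 s3 s4 z d :: real
  assumes "0 \<le> a" "a \<le> 1" "0 \<le> b" "b \<le> 1"
    "\<bar>s1 - z\<bar> \<le> d" "\<bar>s2 - z\<bar> \<le> d" "\<bar>s3 - z\<bar> \<le> d" "\<bar>s4 - z\<bar> \<le> d"
  shows "\<bar>(1 - a) * (1 - b) * s1 + a * (1 - b) * s2 + (1 - a) * b * s3 + a * b * s4 - z\<bar> \<le> d"
proof -
  have weighted: "\<bar>w * (s - z)\<bar> \<le> w * d" if "0 \<le> w" "\<bar>s - z\<bar> \<le> d" for w s
    using that by (simp add: abs_mult mult_left_mono)
  have "(1 - a) * (1 - b) * s1 + a * (1 - b) * s2 + (1 - a) * b * s3 + a * b * s4 - z
      = (1 - a) * (1 - b) * (s1 - z) + a * (1 - b) * (s2 - z) + (1 - a) * b * (s3 - z) + a * b * (s4 - z)"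
    by (simp add: algebra_simps)
  moreover have "(1 - a) * (1 - b) * d + a * (1 - b) * d + (1 - a) * b * d + a * b * d = d"
    by (simp add: algebra_simps)
  moreover have "\<bar>(1 - a) * (1 - b) * (s1 - z)\<bar> \<le> (1 - a) * (1 - b) * d"
       "\<bar>a * (1 - b) * (s2 - z)\<bar> \<le> a * (1 - b) * d"
       "\<bar>(1 - a) * b * (s3 - z)\<bar> \<le> (1 - a) * b * d"
       "\<bar>a * b * (s4 - z)\<bar> \<le> a * b * d"
    using assms by (auto intro!: weighted)
  ultimately show ?thesis by linarith
qed

lemma grid_cell_index:
  assumes "n \<ge> 1" "w \<in> {0..1}"
  defines "i \<equiv> min (n - 1) (nat \<lfloor>real n * w\<rfloor>)"
  shows "i < n" "0 \<le> real n * w - real i" "real n * w - real i \<le> 1"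
    "\<bar>real i / real n - w\<bar> \<le> 1 / real n" "\<bar>real (i + 1) / real n - w\<bar> \<le> 1 / real n"
proof -
  have n_pos: "real n > 0" using assms(1) by simp
  have nw: "0 \<le> real n * w" "real n * w \<le> real n" using assms(2) by (auto intro: mult_left_le)
  show "i < n" using assms(1) by (simp add: i_def)
  show a0: "0 \<le> real n * w - real i"
    using nw by (simp add: i_def) linarith
  show a1: "real n * w - real i \<le> 1"
    using nw assms(1) by (simp add: i_def min_def) linarith
  have "real i / real n - w = - ((real n * w - real i) / real n)"
    "real (i + 1) / real n - w = (1 - (real n * w - real i)) / real n"
    using n_pos by (simp_all add: field_simps)
  moreover have "(real n * w - real i) / real n \<le> 1 / real n"
    "(1 - (real n * w - real i)) / real n \<le> 1 / real n"
    using a0 a1 n_pos by (simp_all add: divide_right_mono)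
  ultimately show "\<bar>real i / real n - w\<bar> \<le> 1 / real n" "\<bar>real (i + 1) / real n - w\<bar> \<le> 1 / real n"
    using a0 a1 n_pos by simp_all
qed

definition emp_dfs_within ::
    "nat \<Rightarrow> (nat \<Rightarrow> real) \<Rightarrow> (nat \<Rightarrow> real) \<Rightarrow> (real \<Rightarrow> real \<Rightarrow> real) \<Rightarrow> (real \<Rightarrow> real) \<Rightarrow> (real \<Rightarrow> real)
      \<Rightarrow> real \<Rightarrow> bool" where
  "emp_dfs_within n xs ys H F G t \<longleftrightarrow>
     (\<forall>x y. \<bar>emp_joint_df n xs ys x y - H x y\<bar> \<le> t) \<and>
     (\<forall>x. \<bar>emp_df n xs x - F x\<bar> \<le> t) \<and> (\<forall>y. \<bar>emp_df n ys y - G y\<bar> \<le> t)"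

lemma emp_subcopula_dist_le:
  fixes xs ys :: "nat \<Rightarrow> real" and F G :: "real \<Rightarrow> real"
  assumes A: "is_copula A" and n: "n \<ge> 1" and inj: "inj_on xs {..<n}" "inj_on ys {..<n}"
    and F: "\<And>x. F x \<in> {0..1}" and G: "\<And>y. G y \<in> {0..1}"
    and within: "emp_dfs_within n xs ys (\<lambda>x y. A (F x) (G y)) F G t"
    and "i \<le> n" "j \<le> n"
  shows "\<bar>emp_subcopula n xs ys (real i / real n) (real j / real n) - A (real i / real n) (real j / real n)\<bar>
    \<le> 3 * t"
proof -
  obtain x y where x: "emp_df n xs x = real i / real n" and y: "emp_df n ys y = real j / real n"
    using exists_emp_df_eq[OF inj(1) \<open>i \<le> n\<close>] exists_emp_df_eq[OF inj(2) \<open>j \<le> n\<close>] by blast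
  have ij: "real i / real n \<in> {0..1}" "real j / real n \<in> {0..1}" using assms(8,9) n by auto
  have "emp_subcopula n xs ys (real i / real n) (real j / real n) = emp_joint_df n xs ys x y"
    using emp_joint_df_eq_emp_subcopula[OF n inj] x y by simp
  moreover have "\<bar>emp_joint_df n xs ys x y - A (F x) (G y)\<bar> \<le> t"
    "\<bar>F x - real i / real n\<bar> \<le> t" "\<bar>G y - real j / real n\<bar> \<le> t"
    using within unfolding emp_dfs_within_def x[symmetric] y[symmetric]
    by (simp_all add: abs_minus_commute)
  moreover have "\<bar>A (F x) (G y) - A (real i / real n) (real j / real n)\<bar>
      \<le> \<bar>F x - real i / real n\<bar> + \<bar>G y - real j / real n\<bar>"
    by (rule copula_lipschitz[OF A F ij(1) G ij(2)])
  ultimately show ?thesis by linarith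
qed

lemma emp_copula_dist_le:
  fixes xs ys :: "nat \<Rightarrow> real" and F G :: "real \<Rightarrow> real"
  assumes A: "is_copula A" and n: "n \<ge> 1" and inj: "inj_on xs {..<n}" "inj_on ys {..<n}"
    and F: "\<And>x. F x \<in> {0..1}" and G: "\<And>y. G y \<in> {0..1}"
    and within: "emp_dfs_within n xs ys (\<lambda>x y. A (F x) (G y)) F G t"
    and u: "u \<in> {0..1}" and v: "v \<in> {0..1}"
  shows "\<bar>emp_copula n xs ys u v - A u v\<bar> \<le> 3 * t + 2 / real n"
proof -
  define S where "S = emp_subcopula n xs ys"
  have node: "\<bar>S (real i / real n) (real j / real n) - A u v\<bar> \<le> 3 * t + 2 / real n"
    if "i \<le> n" "j \<le> n" "\<bar>real i / real n - u\<bar> \<le> 1 / real n" "\<bar>real j / real n - v\<bar> \<le> 1 / real n"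
    for i j
  proof -
    have "real i / real n \<in> {0..1}" "real j / real n \<in> {0..1}" using that n by auto
    then have "\<bar>A (real i / real n) (real j / real n) - A u v\<bar>
        \<le> \<bar>real i / real n - u\<bar> + \<bar>real j / real n - v\<bar>"
      using copula_lipschitz[OF A _ u _ v] by blast
    then show ?thesis
      using emp_subcopula_dist_le[OF A n inj F G within that(1,2)] that(3,4) by (simp add: S_def)
  qed
  define i where "i = min (n - 1) (nat \<lfloor>real n * u\<rfloor>)"
  define j where "j = min (n - 1) (nat \<lfloor>real n * v\<rfloor>)"
  note i = grid_cell_index[OF n u, folded i_def] and j = grid_cell_index[OF n v, folded j_def]
  have "emp_copula n xs ys u v =
      (1 - (real n * u - real i)) * (1 - (real n * v - real j)) * S (real i / real n) (real j / real n)
    + (real n * u - real i) * (1 - (real n * v - real j)) * S (real (i + 1) / real n) (real j / real n)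
    + (1 - (real n * u - real i)) * (real n * v - real j) * S (real i / real n) (real (j + 1) / real n)
    + (real n * u - real i) * (real n * v - real j) * S (real (i + 1) / real n) (real (j + 1) / real n)"
    unfolding emp_copula_def Let_def S_def i_def j_def ..
  also have "\<bar>\<dots> - A u v\<bar> \<le> 3 * t + 2 / real n"
    using i j by (intro bilinear_interpolation_dist_le node) auto
  finally show ?thesis .
qed

section \<open>Quantile grids of a continuous distribution\<close>

lemma (in prob_space) prob_eq_0_if_continuous_joint_cdf:
  fixes U V :: "'a \<Rightarrow> real"
  assumes U: "random_variable borel U" and V: "random_variable borel V"
    and cont: "continuous_on UNIV (\<lambda>(x,y). prob {\<omega>\<in>space M. U \<omega> \<le> x \<and> V \<omega> \<le> y})"
  shows "prob {\<omega>\<in>space M. U \<omega> = x} = 0"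
proof -
  define H where "H a b = prob {\<omega>\<in>space M. U \<omega> \<le> a \<and> V \<omega> \<le> b}" for a b
  define B where "B m = {\<omega>\<in>space M. U \<omega> = x \<and> V \<omega> \<le> real m}" for m :: nat
  have B_sets: "B m \<in> sets M" for m unfolding B_def using U V by measurable
  have "B m \<in> null_sets M" for m
  proof -
    have "prob (B m) \<le> H x (real m) - H (x - \<epsilon>) (real m)" if "\<epsilon> > 0" for \<epsilon>
    proof -
      define S where "S a = {\<omega>\<in>space M. U \<omega> \<le> a \<and> V \<omega> \<le> real m}" for a
      have S_sets: "S a \<in> sets M" for a unfolding S_def using U V by measurable
      have "B m \<subseteq> S x - S (x - \<epsilon>)" unfolding B_def S_def using that by auto
      then have "prob (B m) \<le> prob (S x - S (x - \<epsilon>))"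
        using S_sets by (intro finite_measure_mono) auto
      also have "\<dots> = prob (S x) - prob (S (x - \<epsilon>))"
        using S_sets that by (intro finite_measure_Diff) (auto simp: S_def)
      finally show ?thesis by (simp add: H_def S_def)
    qed
    moreover have "(\<lambda>j. H (x - inverse (real (Suc j))) (real m)) \<longlonglongrightarrow> H x (real m)"
    proof -
      have "isCont (\<lambda>(a,b). H a b) (x, real m)"
        using cont unfolding H_def by (simp add: continuous_on_eq_continuous_at)
      moreover have "(\<lambda>j. (x - inverse (real (Suc j)), real m)) \<longlonglongrightarrow> (x, real m)"
        using LIMSEQ_inverse_real_of_nat_add_minus[of x] by (intro tendsto_Pair) auto
      ultimately show ?thesis using isCont_tendsto_compose by fastforce
    qed
    ultimately have "prob (B m) \<le> H x (real m) - H x (real m)"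
      by (intro LIMSEQ_le_const[OF tendsto_diff[OF tendsto_const]]) auto
    then show ?thesis
      using B_sets measure_nonneg[of M "B m"] by (simp add: emeasure_eq_measure null_sets_def)
  qed
  then have "(\<Union>m. B m) \<in> null_sets M" by blast
  moreover have "{\<omega>\<in>space M. U \<omega> = x} = (\<Union>m. B m)"
    by (auto simp: B_def intro: real_arch_simple)
  ultimately show ?thesis by (simp add: measure_eq_0_null_sets)
qed

definition quantile_pt :: "(real \<Rightarrow> real) \<Rightarrow> nat \<Rightarrow> nat \<Rightarrow> real" where
  "quantile_pt F n q = (SOME c. F c = real q / real n)"

definition quantile_ray :: "(real \<Rightarrow> real) \<Rightarrow> nat \<Rightarrow> nat \<Rightarrow> real set" where
  "quantile_ray F n q = (if q = 0 then {} else if n \<le> q then UNIV else {..quantile_pt F n q})"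

lemma quantile_ray_borel [measurable]: "quantile_ray F n q \<in> sets borel"
  by (auto simp: quantile_ray_def)

locale quantile_grid =
  fixes F :: "real \<Rightarrow> real"
  assumes F_mono: "mono F"
    and F_attains: "\<And>p. 0 < p \<Longrightarrow> p < 1 \<Longrightarrow> \<exists>c. F c = p"
begin

lemma F_quantile_pt: "0 < q \<Longrightarrow> q < n \<Longrightarrow> F (quantile_pt F n q) = real q / real n"
  unfolding quantile_pt_def by (rule someI_ex, rule F_attains) auto

lemma quantile_pt_less: "0 < q \<Longrightarrow> Suc q < n \<Longrightarrow> quantile_pt F n q < quantile_pt F n (Suc q)"
proof (rule ccontr)
  assume q: "0 < q" "Suc q < n" and "\<not> quantile_pt F n q < quantile_pt F n (Suc q)"
  then have "F (quantile_pt F n (Suc q)) \<le> F (quantile_pt F n q)" using F_mono by (auto simp: mono_def)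
  then show False using F_quantile_pt[of q n] F_quantile_pt[of "Suc q" n] q by (simp add: divide_le_cancel)
qed

lemma quantile_ray_subset_Suc: "quantile_ray F n q \<subseteq> quantile_ray F n (Suc q)"
  unfolding quantile_ray_def using quantile_pt_less[of q n] by auto

lemma quantile_ray_cover:
  assumes "n \<ge> 1"
  obtains q where "q < n" "z \<in> quantile_ray F n (Suc q)" "z \<notin> quantile_ray F n q"
proof -
  define Q where "Q = {q. q < n \<and> (q = 0 \<or> quantile_pt F n q < z)}"
  have "finite Q" "0 \<in> Q" unfolding Q_def using assms by auto
  then have "Max Q \<in> Q" "\<And>q. q \<in> Q \<Longrightarrow> q \<le> Max Q" by (auto intro: Max_in)
  moreover have "z \<in> quantile_ray F n (Suc (Max Q))"
  proof (cases "n \<le> Suc (Max Q)")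
    case False
    then have "Suc (Max Q) \<notin> Q" using \<open>\<And>q. q \<in> Q \<Longrightarrow> q \<le> Max Q\<close> by fastforce
    then show ?thesis using False unfolding Q_def quantile_ray_def by auto
  qed (simp add: quantile_ray_def)
  ultimately show ?thesis using that[of "Max Q"] unfolding Q_def quantile_ray_def by auto
qed

lemma quantile_ray_sandwich:
  assumes "n \<ge> 1" and I: "I = UNIV \<or> (\<exists>x. I = {..x})"
  obtains q where "q < n" "quantile_ray F n q \<subseteq> I" "I \<subseteq> quantile_ray F n (Suc q)"
proof (cases "I = UNIV")
  case True
  then show ?thesis using that[of "n - 1"] assms(1) by (auto simp: quantile_ray_def)
next
  case False
  then obtain x where x: "I = {..x}" using I by auto
  obtain q where "q < n" "x \<in> quantile_ray F n (Suc q)" "x \<notin> quantile_ray F n q"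
    using quantile_ray_cover[OF assms(1)] by blast
  then show ?thesis
    using that[of q] unfolding x quantile_ray_def by (auto split: if_splits)
qed

end

lemma (in prob_space) quantile_grid_cdf:
  fixes U :: "'a \<Rightarrow> real"
  assumes U: "random_variable borel U" and atomless: "\<And>x. prob {\<omega>\<in>space M. U \<omega> = x} = 0"
  shows "quantile_grid (\<lambda>x. prob {\<omega>\<in>space M. U \<omega> \<le> x})"
proof -
  interpret D: real_distribution "distr M borel U" using U by (rule real_distribution_distr)
  have cdf_eq: "(\<lambda>x. prob {\<omega>\<in>space M. U \<omega> \<le> x}) = cdf (distr M borel U)"
  proof
    fix x
    have "U -` {..x} \<inter> space M = {\<omega>\<in>space M. U \<omega> \<le> x}" by auto
    then show "prob {\<omega>\<in>space M. U \<omega> \<le> x} = cdf (distr M borel U) x"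
      unfolding cdf_def using U by (simp add: measure_distr)
  qed
  have cont: "isCont (cdf (distr M borel U)) x" for x
  proof -
    have "U -` {x} \<inter> space M = {\<omega>\<in>space M. U \<omega> = x}" by auto
    then have "measure (distr M borel U) {x} = 0" using U atomless by (simp add: measure_distr)
    then show ?thesis by (simp add: D.isCont_cdf)
  qed
  show ?thesis
    unfolding cdf_eq
  proof
    show "mono (cdf (distr M borel U))" by (auto intro: monoI D.cdf_nondecreasing)
  next
    fix p :: real assume p: "0 < p" "p < 1"
    obtain a where a: "cdf (distr M borel U) a < p"
      using order_tendstoD(2)[OF D.cdf_lim_at_bot p(1)] by (auto simp: eventually_at_bot_linorder)
    obtain b where b: "cdf (distr M borel U) b > p"
      using order_tendstoD(1)[OF D.cdf_lim_at_top_prob p(2)] by (auto simp: eventually_at_top_linorder)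
    have "a \<le> b" using a b D.cdf_nondecreasing[of b a] by (cases "a \<le> b") auto
    then show "\<exists>c. cdf (distr M borel U) c = p"
      using IVT'[of "cdf (distr M borel U)" a p b] a b cont by (auto intro: continuous_at_imp_continuous_on)
  qed
qed

lemma (in prob_space) prob_quantile_ray:
  fixes U :: "'a \<Rightarrow> real"
  defines "F \<equiv> \<lambda>x. prob {\<omega>\<in>space M. U \<omega> \<le> x}"
  assumes "quantile_grid F" and "n \<ge> 1" "q \<le> n"
  shows "prob {\<omega>\<in>space M. U \<omega> \<in> quantile_ray F n q} = real q / real n"
  using assms quantile_grid.F_quantile_pt[OF assms(2), of q n] prob_space
  by (cases "q = 0"; cases "q = n") (auto simp: quantile_ray_def F_def)

lemma (in prob_space) prob_quantile_cell:
  fixes U :: "'a \<Rightarrow> real"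
  defines "F \<equiv> \<lambda>x. prob {\<omega>\<in>space M. U \<omega> \<le> x}"
  assumes U: "random_variable borel U" and grid: "quantile_grid F" and "q < n"
  shows "prob {\<omega>\<in>space M. U \<omega> \<in> quantile_ray F n (Suc q) - quantile_ray F n q} = 1 / real n"
proof -
  have "{\<omega>\<in>space M. U \<omega> \<in> quantile_ray F n (Suc q) - quantile_ray F n q}
      = {\<omega>\<in>space M. U \<omega> \<in> quantile_ray F n (Suc q)} - {\<omega>\<in>space M. U \<omega> \<in> quantile_ray F n q}"
    by auto
  also have "prob \<dots> = prob {\<omega>\<in>space M. U \<omega> \<in> quantile_ray F n (Suc q)}
                       - prob {\<omega>\<in>space M. U \<omega> \<in> quantile_ray F n q}"
    using quantile_grid.quantile_ray_subset_Suc[OF grid] U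
    by (intro finite_measure_Diff) (measurable, auto)
  also have "\<dots> = 1 / real n"
    using prob_quantile_ray[OF grid[unfolded F_def]] \<open>q < n\<close>
    by (simp add: F_def flip: diff_divide_distrib)
  finally show ?thesis .
qed

text \<open>The \<open>n\<close> quantile cells each carry mass \<open>1/n\<close>, so a tie has probability at most
  \<open>n \<cdot> (1/n)\<^sup>2\<close>.\<close>
lemma (in prob_space) prob_tie_eq_0:
  fixes U V :: "'a \<Rightarrow> real"
  defines "F \<equiv> \<lambda>x. prob {\<omega>\<in>space M. U \<omega> \<le> x}"
  assumes U: "random_variable borel U" and V: "random_variable borel V"
    and grid: "quantile_grid F"
    and same_law: "\<And>B. B \<in> sets borel \<Longrightarrow> prob {\<omega>\<in>space M. V \<omega> \<in> B} = prob {\<omega>\<in>space M. U \<omega> \<in> B}"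
    and indep: "\<And>B. B \<in> sets borel \<Longrightarrow>
      prob {\<omega>\<in>space M. U \<omega> \<in> B \<and> V \<omega> \<in> B} = prob {\<omega>\<in>space M. U \<omega> \<in> B} * prob {\<omega>\<in>space M. V \<omega> \<in> B}"
  shows "prob {\<omega>\<in>space M. U \<omega> = V \<omega>} = 0"
proof -
  have "prob {\<omega>\<in>space M. U \<omega> = V \<omega>} \<le> 1 / real (Suc n)" for n
  proof -
    define C where "C q = quantile_ray F (Suc n) (Suc q) - quantile_ray F (Suc n) q" for q
    define E where "E q = {\<omega>\<in>space M. U \<omega> \<in> C q \<and> V \<omega> \<in> C q}" for q
    have C_borel: "C q \<in> sets borel" for q unfolding C_def by measurable
    then have E_sets: "E q \<in> sets M" for q unfolding E_def using U V by measurable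
    have "{\<omega>\<in>space M. U \<omega> = V \<omega>} \<subseteq> (\<Union>q\<in>{..<Suc n}. E q)"
    proof
      fix \<omega> assume "\<omega> \<in> {\<omega>\<in>space M. U \<omega> = V \<omega>}"
      moreover obtain q where "q < Suc n" "U \<omega> \<in> C q"
        using quantile_grid.quantile_ray_cover[OF grid, of "Suc n" "U \<omega>"] by (auto simp: C_def)
      ultimately show "\<omega> \<in> (\<Union>q\<in>{..<Suc n}. E q)" unfolding E_def by auto
    qed
    then have "prob {\<omega>\<in>space M. U \<omega> = V \<omega>} \<le> prob (\<Union>q\<in>{..<Suc n}. E q)"
      using E_sets by (intro finite_measure_mono) auto
    also have "\<dots> \<le> (\<Sum>q<Suc n. prob (E q))" using E_sets by (intro measure_UNION_le) auto
    also have "\<dots> = (\<Sum>q<Suc n. (1 / real (Suc n))\<^sup>2)"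
      using indep[OF C_borel] same_law[OF C_borel] prob_quantile_cell[OF U grid[unfolded F_def]]
      by (intro sum.cong) (auto simp: E_def C_def F_def power2_eq_square)
    also have "\<dots> = 1 / real (Suc n)" by (simp add: power2_eq_square)
    finally show ?thesis .
  qed
  then have "prob {\<omega>\<in>space M. U \<omega> = V \<omega>} \<le> 0"
    using LIMSEQ_inverse_real_of_nat
    by (intro LIMSEQ_le_const[where a="prob {\<omega>\<in>space M. U \<omega> = V \<omega>}"])
       (auto simp: inverse_eq_divide simp del: of_nat_Suc)
  then show ?thesis using measure_nonneg[of M] by (simp add: order_antisym)
qed

section \<open>Almost sure rates for the empirical distribution functions\<close>

lemma summable_sq_exp_neg_powr:
  fixes a :: real
  assumes "a > 0"
  shows "summable (\<lambda>n. 2 * (real n + 1)\<^sup>2 * exp (- 2 * real n powr a))"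
proof -
  have "(\<lambda>n. 2 * (real n + 1)\<^sup>2 * exp (- 2 * real n powr a) * (real n)\<^sup>2) \<longlonglongrightarrow> 0"
    using assms by real_asymp
  then have "\<forall>\<^sub>F n in sequentially. 2 * (real n + 1)\<^sup>2 * exp (- 2 * real n powr a) * (real n)\<^sup>2 < 1"
    by (rule order_tendstoD) simp
  then obtain N0 where N0: "\<And>n. n \<ge> N0 \<Longrightarrow> 2 * (real n + 1)\<^sup>2 * exp (- 2 * real n powr a) * (real n)\<^sup>2 < 1"
    by (auto simp: eventually_sequentially)
  show ?thesis
  proof (rule summable_comparison_test'[OF inverse_power_summable[of 2], where N="max N0 1"])
    fix n assume "max N0 1 \<le> n"
    then have "2 * (real n + 1)\<^sup>2 * exp (- 2 * real n powr a) * (real n)\<^sup>2 < 1" "(real n)\<^sup>2 > 0"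
      using N0 by auto
    then show "norm (2 * (real n + 1)\<^sup>2 * exp (- 2 * real n powr a)) \<le> inverse (real n ^ 2)"
      by (simp add: field_simps)
  qed simp
qed

lemma Times_borel:
  assumes "I \<in> sets borel" "J \<in> sets borel"
  shows "I \<times> J \<in> sets (borel :: (real \<times> real) measure)"
proof -
  have "I \<times> J \<in> sets (borel \<Otimes>\<^sub>M (borel :: real measure))" using assms by (intro pair_measureI) auto
  then show ?thesis unfolding borel_prod .
qed

locale bivariate_sample = prob_space M for M :: "'a measure" +
  fixes X Y :: "'a \<Rightarrow> real" and Xs Ys :: "nat \<Rightarrow> 'a \<Rightarrow> real"
  assumes XY_measurable: "(\<lambda>\<omega>. (X \<omega>, Y \<omega>)) \<in> borel_measurable M"
    and indep: "indep_vars (\<lambda>_. borel) (\<lambda>i \<omega>. (Xs i \<omega>, Ys i \<omega>)) UNIV"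
    and distr_sample: "\<And>i. distr M borel (\<lambda>\<omega>. (Xs i \<omega>, Ys i \<omega>)) = distr M borel (\<lambda>\<omega>. (X \<omega>, Y \<omega>))"
    and joint_cdf_continuous:
      "continuous_on UNIV (\<lambda>(x,y). prob {\<omega>\<in>space M. X \<omega> \<le> x \<and> Y \<omega> \<le> y})"
begin

lemma sample_measurable: "(\<lambda>\<omega>. (Xs i \<omega>, Ys i \<omega>)) \<in> borel_measurable M"
  using indep unfolding indep_vars_def by auto

lemma component_measurable [measurable]:
  "X \<in> borel_measurable M" "Y \<in> borel_measurable M"
  "Xs i \<in> borel_measurable M" "Ys i \<in> borel_measurable M"
  using XY_measurable sample_measurable[of i]
  unfolding borel_prod[symmetric] measurable_pair_iff by (simp_all add: comp_def)

lemma prob_sample: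
  assumes "B \<in> sets borel"
  shows "prob {\<omega>\<in>space M. (Xs i \<omega>, Ys i \<omega>) \<in> B} = prob {\<omega>\<in>space M. (X \<omega>, Y \<omega>) \<in> B}"
proof -
  have "prob {\<omega>\<in>space M. (Xs i \<omega>, Ys i \<omega>) \<in> B} = measure (distr M borel (\<lambda>\<omega>. (Xs i \<omega>, Ys i \<omega>))) B"
    using assms sample_measurable by (subst measure_distr) (auto intro!: arg_cong[where f=prob])
  also have "\<dots> = measure (distr M borel (\<lambda>\<omega>. (X \<omega>, Y \<omega>))) B" by (simp add: distr_sample)
  also have "\<dots> = prob {\<omega>\<in>space M. (X \<omega>, Y \<omega>) \<in> B}"
    using assms XY_measurable by (subst measure_distr) (auto intro!: arg_cong[where f=prob])
  finally show ?thesis .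
qed

lemma prob_sample_indep:
  assumes "k \<noteq> l" "B \<in> sets borel"
  shows "prob {\<omega>\<in>space M. (Xs k \<omega>, Ys k \<omega>) \<in> B \<and> (Xs l \<omega>, Ys l \<omega>) \<in> B}
       = prob {\<omega>\<in>space M. (Xs k \<omega>, Ys k \<omega>) \<in> B} * prob {\<omega>\<in>space M. (Xs l \<omega>, Ys l \<omega>) \<in> B}"
proof -
  have "prob (\<Inter>i\<in>{k,l}. (\<lambda>\<omega>. (Xs i \<omega>, Ys i \<omega>)) -` B \<inter> space M)
      = (\<Prod>i\<in>{k,l}. prob ((\<lambda>\<omega>. (Xs i \<omega>, Ys i \<omega>)) -` B \<inter> space M))"
    using assms(2) by (intro indep_varsD[OF indep]) auto
  moreover have "(\<lambda>\<omega>. (Xs i \<omega>, Ys i \<omega>)) -` B \<inter> space M = {\<omega>\<in>space M. (Xs i \<omega>, Ys i \<omega>) \<in> B}" for i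
    by auto
  moreover have "(\<Inter>i\<in>{k,l}. (\<lambda>\<omega>. (Xs i \<omega>, Ys i \<omega>)) -` B \<inter> space M)
      = {\<omega>\<in>space M. (Xs k \<omega>, Ys k \<omega>) \<in> B \<and> (Xs l \<omega>, Ys l \<omega>) \<in> B}"
    by auto
  ultimately show ?thesis using assms(1) by simp
qed

definition F :: "real \<Rightarrow> real" where "F x = prob {\<omega>\<in>space M. X \<omega> \<le> x}"
definition G :: "real \<Rightarrow> real" where "G y = prob {\<omega>\<in>space M. Y \<omega> \<le> y}"

lemma F_in_unit: "F x \<in> {0..1}" and G_in_unit: "G y \<in> {0..1}"
  by (simp_all add: F_def G_def)

lemma quantile_grid_F: "quantile_grid F"
  unfolding F_def
  by (intro quantile_grid_cdf prob_eq_0_if_continuous_joint_cdf[OF _ _ joint_cdf_continuous]) simp_all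

lemma quantile_grid_G: "quantile_grid G"
proof -
  have "continuous_on UNIV ((\<lambda>(x,y). prob {\<omega>\<in>space M. X \<omega> \<le> x \<and> Y \<omega> \<le> y}) \<circ> prod.swap)"
    by (intro continuous_on_compose continuous_on_subset[OF joint_cdf_continuous]) (auto intro!: continuous_intros)
  then have "continuous_on UNIV (\<lambda>(y,x). prob {\<omega>\<in>space M. Y \<omega> \<le> y \<and> X \<omega> \<le> x})"
    by (simp add: comp_def case_prod_beta conj_commute)
  then show ?thesis
    unfolding G_def by (intro quantile_grid_cdf prob_eq_0_if_continuous_joint_cdf) simp_all
qed

lemma ties_AE: "AE \<omega> in M. \<forall>k l. k \<noteq> l \<longrightarrow> Xs k \<omega> \<noteq> Xs l \<omega> \<and> Ys k \<omega> \<noteq> Ys l \<omega>"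
proof -
  have ties_null: "prob {\<omega>\<in>space M. Xs k \<omega> = Xs l \<omega>} = 0" "prob {\<omega>\<in>space M. Ys k \<omega> = Ys l \<omega>} = 0"
    if "k \<noteq> l" for k l
  proof -
    have law: "prob {\<omega>\<in>space M. Xs i \<omega> \<in> B} = prob {\<omega>\<in>space M. X \<omega> \<in> B}"
      "prob {\<omega>\<in>space M. Ys i \<omega> \<in> B} = prob {\<omega>\<in>space M. Y \<omega> \<in> B}" if "B \<in> sets borel" for i B
      using prob_sample[of "B \<times> UNIV" i] prob_sample[of "UNIV \<times> B" i] that
      by (simp_all add: borel_prod[symmetric])
    have "(\<lambda>x. prob {\<omega>\<in>space M. Xs k \<omega> \<le> x}) = F" "(\<lambda>y. prob {\<omega>\<in>space M. Ys k \<omega> \<le> y}) = G"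
      using law[of "{.._}"] by (auto simp: F_def G_def)
    then show "prob {\<omega>\<in>space M. Xs k \<omega> = Xs l \<omega>} = 0" "prob {\<omega>\<in>space M. Ys k \<omega> = Ys l \<omega>} = 0"
      using prob_sample_indep[OF that, of "_ \<times> UNIV"] prob_sample_indep[OF that, of "UNIV \<times> _"] law
      by (auto intro!: prob_tie_eq_0 quantile_grid_F quantile_grid_G simp: borel_prod[symmetric])
  qed
  have "AE \<omega> in M. k \<noteq> l \<longrightarrow> Xs k \<omega> \<noteq> Xs l \<omega> \<and> Ys k \<omega> \<noteq> Ys l \<omega>" for k l
  proof (cases "k = l")
    case False
    then have null: "{\<omega>\<in>space M. Xs k \<omega> = Xs l \<omega>} \<in> null_sets M"
        "{\<omega>\<in>space M. Ys k \<omega> = Ys l \<omega>} \<in> null_sets M"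
      using ties_null by (auto simp: null_sets_def emeasure_eq_measure) measurable
    show ?thesis by (rule AE_I'[OF null_sets.Un[OF null]]) auto
  qed simp
  then show ?thesis by (simp add: AE_all_countable)
qed

definition emp_rect :: "nat \<Rightarrow> 'a \<Rightarrow> real set \<Rightarrow> real set \<Rightarrow> real" where
  "emp_rect n \<omega> I J = real (card {k. k < n \<and> Xs k \<omega> \<in> I \<and> Ys k \<omega> \<in> J}) / real n"

definition rect_prob :: "real set \<Rightarrow> real set \<Rightarrow> real" where
  "rect_prob I J = prob {\<omega>\<in>space M. X \<omega> \<in> I \<and> Y \<omega> \<in> J}"

lemma emp_rect_eq_sum_indicator:
  "emp_rect n \<omega> I J = (\<Sum>k<n. indicator (I \<times> J) (Xs k \<omega>, Ys k \<omega>)) / real n"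
proof -
  have "(\<Sum>k<n. indicator (I \<times> J) (Xs k \<omega>, Ys k \<omega>) :: real)
      = (\<Sum>k\<in>{k. k < n \<and> Xs k \<omega> \<in> I \<and> Ys k \<omega> \<in> J}. 1)"
    by (intro sum.mono_neutral_cong_right) (auto simp: indicator_def)
  then show ?thesis by (simp add: emp_rect_def)
qed

lemma emp_rect_measurable [measurable]:
  assumes "I \<in> sets borel" "J \<in> sets borel"
  shows "(\<lambda>\<omega>. emp_rect n \<omega> I J) \<in> borel_measurable M"
proof -
  have "(indicator (I \<times> J) :: real \<times> real \<Rightarrow> real) \<in> borel_measurable borel"
    by (rule borel_measurable_indicator[OF Times_borel[OF assms]])
  then have "(\<lambda>\<omega>. indicator (I \<times> J) (Xs k \<omega>, Ys k \<omega>) :: real) \<in> borel_measurable M" for k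
    using measurable_compose[OF sample_measurable] by simp
  then show ?thesis unfolding emp_rect_eq_sum_indicator
    by (intro borel_measurable_divide borel_measurable_sum borel_measurable_const)
qed

lemma hoeffding_emp_rect:
  assumes I: "I \<in> sets borel" and J: "J \<in> sets borel" and "n \<ge> 1" "\<epsilon> \<ge> 0"
  shows "prob {\<omega>\<in>space M. \<epsilon> \<le> \<bar>emp_rect n \<omega> I J - rect_prob I J\<bar>} \<le> 2 * exp (- 2 * real n * \<epsilon>\<^sup>2)"
proof -
  define W where "W = (\<lambda>k \<omega>. indicator (I \<times> J) (Xs k \<omega>, Ys k \<omega>) :: real)"
  define W0 where "W0 = (\<lambda>\<omega>. indicator (I \<times> J) (X \<omega>, Y \<omega>) :: real)"
  have ind: "(indicator (I \<times> J) :: real \<times> real \<Rightarrow> real) \<in> borel_measurable borel"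
    by (rule borel_measurable_indicator[OF Times_borel[OF I J]])
  have mean: "expectation W0 = rect_prob I J"
  proof -
    have "expectation W0 = expectation (indicator ((\<lambda>\<omega>. (X \<omega>, Y \<omega>)) -` (I \<times> J) \<inter> space M))"
      by (intro Bochner_Integration.integral_cong) (auto simp: W0_def indicator_def)
    also have "\<dots> = prob ((\<lambda>\<omega>. (X \<omega>, Y \<omega>)) -` (I \<times> J) \<inter> space M)" by simp
    also have "(\<lambda>\<omega>. (X \<omega>, Y \<omega>)) -` (I \<times> J) \<inter> space M = {\<omega>\<in>space M. X \<omega> \<in> I \<and> Y \<omega> \<in> J}" by auto
    finally show ?thesis unfolding rect_prob_def .
  qed
  interpret H: Hoeffding_ineq_iid M "{..<n}" W W0 0 1 "expectation W0"
  proof unfold_locales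
    show "indep_vars (\<lambda>_. borel) W {..<n}"
      unfolding W_def
      by (rule indep_vars_subset[OF indep_vars_compose2[OF indep, of "\<lambda>_. indicator (I \<times> J)" "\<lambda>_. borel"]])
         (use ind in auto)
  next
    fix i
    have "distr M borel (W i) = distr (distr M borel (\<lambda>\<omega>. (Xs i \<omega>, Ys i \<omega>))) borel (indicator (I \<times> J))"
      by (subst distr_distr[OF ind sample_measurable]) (simp add: W_def comp_def)
    also have "\<dots> = distr M borel W0"
      by (simp add: distr_sample distr_distr[OF ind XY_measurable] W0_def comp_def)
    finally show "distr M borel (W i) = distr M borel W0" .
  next
    show "W0 \<in> borel_measurable M" unfolding W0_def using measurable_compose[OF XY_measurable ind] by simp
  qed (auto simp: W0_def indicator_def)
  have "prob {\<omega>\<in>space M. \<epsilon> \<le> \<bar>(\<Sum>i\<in>{..<n}. W i \<omega>) / real (card {..<n}) - expectation W0\<bar>}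
      \<le> 2 * exp (- 2 * real (card {..<n}) * \<epsilon>\<^sup>2 / (1 - 0)\<^sup>2)"
    using \<open>n \<ge> 1\<close> by (intro H.Hoeffding_ineq_abs_ge' \<open>\<epsilon> \<ge> 0\<close>) (auto simp: lessThan_empty_iff)
  then show ?thesis unfolding mean W_def emp_rect_eq_sum_indicator by simp
qed

lemma emp_rect_mono: "I \<subseteq> I' \<Longrightarrow> J \<subseteq> J' \<Longrightarrow> emp_rect n \<omega> I J \<le> emp_rect n \<omega> I' J'"
  unfolding emp_rect_def by (intro divide_right_mono) (auto intro!: card_mono)

lemma rect_prob_mono:
  "I' \<in> sets borel \<Longrightarrow> J' \<in> sets borel \<Longrightarrow> I \<subseteq> I' \<Longrightarrow> J \<subseteq> J' \<Longrightarrow> rect_prob I J \<le> rect_prob I' J'"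
  unfolding rect_prob_def by (intro finite_measure_mono) (auto, measurable)

lemma rect_prob_quantile_gap:
  assumes "q < n" "r < n"
  shows "rect_prob (quantile_ray F n (Suc q)) (quantile_ray G n (Suc r))
           \<le> rect_prob (quantile_ray F n q) (quantile_ray G n r) + 2 / real n"
proof -
  let ?I0 = "quantile_ray F n q" and ?I1 = "quantile_ray F n (Suc q)"
  let ?J0 = "quantile_ray G n r" and ?J1 = "quantile_ray G n (Suc r)"
  have "{\<omega>\<in>space M. X \<omega> \<in> ?I1 \<and> Y \<omega> \<in> ?J1} \<subseteq> {\<omega>\<in>space M. X \<omega> \<in> ?I0 \<and> Y \<omega> \<in> ?J0}
      \<union> {\<omega>\<in>space M. X \<omega> \<in> ?I1 - ?I0} \<union> {\<omega>\<in>space M. Y \<omega> \<in> ?J1 - ?J0}"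
    by auto
  then have "rect_prob ?I1 ?J1 \<le> prob ({\<omega>\<in>space M. X \<omega> \<in> ?I0 \<and> Y \<omega> \<in> ?J0}
      \<union> {\<omega>\<in>space M. X \<omega> \<in> ?I1 - ?I0} \<union> {\<omega>\<in>space M. Y \<omega> \<in> ?J1 - ?J0})"
    unfolding rect_prob_def by (intro finite_measure_mono) measurable
  also have "\<dots> \<le> rect_prob ?I0 ?J0 + prob {\<omega>\<in>space M. X \<omega> \<in> ?I1 - ?I0}
      + prob {\<omega>\<in>space M. Y \<omega> \<in> ?J1 - ?J0}"
    unfolding rect_prob_def by (intro order_trans[OF measure_Un_le] add_mono measure_Un_le) measurable
  also have "\<dots> = rect_prob ?I0 ?J0 + 2 / real n"
    using prob_quantile_cell[of X, folded F_def, OF _ quantile_grid_F assms(1)]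
      prob_quantile_cell[of Y, folded G_def, OF _ quantile_grid_G assms(2)]
    by simp
  finally show ?thesis .
qed

definition grid_deviation :: "nat \<Rightarrow> 'a \<Rightarrow> nat \<Rightarrow> nat \<Rightarrow> real" where
  "grid_deviation n \<omega> q r = \<bar>emp_rect n \<omega> (quantile_ray F n q) (quantile_ray G n r)
                               - rect_prob (quantile_ray F n q) (quantile_ray G n r)\<bar>"

lemma emp_rect_dist_le_if_grid:
  assumes n: "n \<ge> 1"
    and grid: "\<And>q r. q \<le> n \<Longrightarrow> r \<le> n \<Longrightarrow> grid_deviation n \<omega> q r \<le> t"
    and I: "I = UNIV \<or> (\<exists>x. I = {..x})" and J: "J = UNIV \<or> (\<exists>y. J = {..y})"
  shows "\<bar>emp_rect n \<omega> I J - rect_prob I J\<bar> \<le> t + 2 / real n"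
proof -
  obtain q where q: "q < n" "quantile_ray F n q \<subseteq> I" "I \<subseteq> quantile_ray F n (Suc q)"
    using quantile_grid.quantile_ray_sandwich[OF quantile_grid_F n I] by blast
  obtain r where r: "r < n" "quantile_ray G n r \<subseteq> J" "J \<subseteq> quantile_ray G n (Suc r)"
    using quantile_grid.quantile_ray_sandwich[OF quantile_grid_G n J] by blast
  have "I \<in> sets borel" "J \<in> sets borel" using I J by auto
  have "emp_rect n \<omega> I J \<le> emp_rect n \<omega> (quantile_ray F n (Suc q)) (quantile_ray G n (Suc r))"
    using q r by (intro emp_rect_mono)
  also have "\<dots> \<le> rect_prob (quantile_ray F n (Suc q)) (quantile_ray G n (Suc r)) + t"
    using grid[of "Suc q" "Suc r"] q r by (auto simp: grid_deviation_def)
  also have "\<dots> \<le> rect_prob (quantile_ray F n q) (quantile_ray G n r) + 2 / real n + t"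
    using rect_prob_quantile_gap[OF q(1) r(1)] by simp
  also have "rect_prob (quantile_ray F n q) (quantile_ray G n r) \<le> rect_prob I J"
    using q r \<open>I \<in> sets borel\<close> \<open>J \<in> sets borel\<close> by (intro rect_prob_mono)
  finally have upper: "emp_rect n \<omega> I J \<le> rect_prob I J + 2 / real n + t" by simp
  have "rect_prob I J \<le> rect_prob (quantile_ray F n (Suc q)) (quantile_ray G n (Suc r))"
    using q r by (intro rect_prob_mono quantile_ray_borel)
  also have "\<dots> \<le> rect_prob (quantile_ray F n q) (quantile_ray G n r) + 2 / real n"
    by (rule rect_prob_quantile_gap[OF q(1) r(1)])
  also have "rect_prob (quantile_ray F n q) (quantile_ray G n r) \<le> emp_rect n \<omega> (quantile_ray F n q) (quantile_ray G n r) + t"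
    using grid[of q r] q r by (auto simp: grid_deviation_def)
  also have "emp_rect n \<omega> (quantile_ray F n q) (quantile_ray G n r) \<le> emp_rect n \<omega> I J"
    using q r by (intro emp_rect_mono)
  finally have lower: "rect_prob I J \<le> emp_rect n \<omega> I J + t + 2 / real n" by simp
  show ?thesis using upper lower by linarith
qed

definition grid_deviation_event :: "real \<Rightarrow> nat \<Rightarrow> 'a set" where
  "grid_deviation_event s' n =
     (\<Union>q\<in>{..n}. \<Union>r\<in>{..n}. {\<omega>\<in>space M. real n powr - s' \<le> grid_deviation n \<omega> q r})"

lemma grid_deviation_event_sets [measurable]: "grid_deviation_event s' n \<in> sets M"
  unfolding grid_deviation_event_def grid_deviation_def by measurable

lemma grid_deviation_measurable [measurable]: "(\<lambda>\<omega>. grid_deviation n \<omega> q r) \<in> borel_measurable M"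
  unfolding grid_deviation_def by measurable

lemma prob_grid_deviation_event_le:
  assumes "n \<ge> 1"
  shows "prob (grid_deviation_event s' n) \<le> 2 * (real n + 1)\<^sup>2 * exp (- 2 * real n powr (1 - 2 * s'))"
proof -
  let ?D = "\<lambda>q r. {\<omega>\<in>space M. real n powr - s' \<le> grid_deviation n \<omega> q r}"
  have "real n * (real n powr - s')\<^sup>2 = real n powr (1 - 2 * s')"
    using assms by (simp add: power2_eq_square powr_diff powr_minus field_simps flip: powr_add)
  then have single: "prob (?D q r) \<le> 2 * exp (- 2 * real n powr (1 - 2 * s'))" for q r
    using hoeffding_emp_rect[OF quantile_ray_borel quantile_ray_borel assms, of "real n powr - s'"]
    by (simp add: grid_deviation_def mult.assoc)
  have sets: "?D q r \<in> sets M" "(\<Union>r\<in>{..n}. ?D q r) \<in> sets M" for q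
    by measurable
  have "prob (grid_deviation_event s' n) \<le> (\<Sum>q\<le>n. prob (\<Union>r\<in>{..n}. ?D q r))"
    unfolding grid_deviation_event_def using sets by (intro measure_UNION_le) auto
  also have "\<dots> \<le> (\<Sum>q\<le>n. \<Sum>r\<le>n. prob (?D q r))"
    using sets by (intro sum_mono measure_UNION_le) auto
  also have "\<dots> \<le> (\<Sum>q\<le>n. \<Sum>r\<le>n. 2 * exp (- 2 * real n powr (1 - 2 * s')))"
    by (intro sum_mono single)
  also have "\<dots> = 2 * (real n + 1)\<^sup>2 * exp (- 2 * real n powr (1 - 2 * s'))"
    by (simp add: power2_eq_square algebra_simps)
  finally show ?thesis .
qed

lemma grid_deviation_AE:
  assumes "s' < 1/2"
  shows "AE \<omega> in M. \<forall>\<^sub>F n in sequentially. \<forall>q\<le>n. \<forall>r\<le>n. grid_deviation n \<omega> q r < real n powr - s'"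
proof -
  have "summable (\<lambda>n. prob (grid_deviation_event s' n))"
    using assms prob_grid_deviation_event_le
    by (intro summable_comparison_test'[OF summable_sq_exp_neg_powr[of "1 - 2 * s'"], where N=1]) auto
  then have "AE \<omega> in M. \<forall>\<^sub>F n in sequentially. \<omega> \<in> space M - grid_deviation_event s' n"
    by (intro borel_cantelli_AE1) (auto simp: emeasure_eq_measure)
  then show ?thesis
    by (elim AE_mp, intro AE_I2 impI) (auto elim!: eventually_mono simp: grid_deviation_event_def not_le)
qed

lemma emp_dfs_within_AE:
  assumes "s' < 1/2"
  shows "AE \<omega> in M. \<forall>\<^sub>F n in sequentially. emp_dfs_within n (\<lambda>k. Xs k \<omega>) (\<lambda>k. Ys k \<omega>)
    (\<lambda>x y. prob {\<omega>\<in>space M. X \<omega> \<le> x \<and> Y \<omega> \<le> y}) F G (real n powr - s' + 2 / real n)"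
  using grid_deviation_AE[OF assms]
proof eventually_elim
  case (elim \<omega>)
  from elim eventually_ge_at_top[of 1] show ?case
  proof eventually_elim
    case (elim n)
    then have rect: "\<bar>emp_rect n \<omega> I J - rect_prob I J\<bar> \<le> real n powr - s' + 2 / real n"
      if "I = UNIV \<or> (\<exists>x. I = {..x})" "J = UNIV \<or> (\<exists>y. J = {..y})" for I J
      using that by (intro emp_rect_dist_le_if_grid) (auto intro: less_imp_le)
    have "emp_joint_df n (\<lambda>k. Xs k \<omega>) (\<lambda>k. Ys k \<omega>) x y = emp_rect n \<omega> {..x} {..y}"
      "emp_df n (\<lambda>k. Xs k \<omega>) x = emp_rect n \<omega> {..x} UNIV" "emp_df n (\<lambda>k. Ys k \<omega>) y = emp_rect n \<omega> UNIV {..y}"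
      "prob {\<omega>\<in>space M. X \<omega> \<le> x \<and> Y \<omega> \<le> y} = rect_prob {..x} {..y}"
      "F x = rect_prob {..x} UNIV" "G y = rect_prob UNIV {..y}" for x y
      by (simp_all add: emp_joint_df_def emp_df_def emp_rect_def rect_prob_def F_def G_def)
    then show ?case unfolding emp_dfs_within_def by (simp add: rect)
  qed
qed

end

section \<open>Convergence of the Bernstein estimator\<close>

lemma uniform_limit_if_dist_le:
  assumes "\<forall>\<^sub>F n in F. \<forall>x\<in>S. dist (f n x) (g x) \<le> c n" and "(c \<longlongrightarrow> 0) F"
  shows "uniform_limit S f g F"
proof (rule uniform_limitI)
  fix e :: real assume "e > 0"
  from assms(1) order_tendstoD(2)[OF assms(2) \<open>e > 0\<close>]
  show "\<forall>\<^sub>F n in F. \<forall>x\<in>S. dist (f n x) (g x) < e"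
    by eventually_elim force
qed

lemma bernstein_emp_copula_uniform_limit:
  fixes xs ys :: "nat \<Rightarrow> real" and F G :: "real \<Rightarrow> real" and N :: "nat \<Rightarrow> nat"
  assumes A: "is_copula A" and K: "cont_markov_kernel A K"
    and N: "filterlim N at_top sequentially"
    and rate: "(\<lambda>n. real (N n) * (t n + 1 / real n)) \<longlonglongrightarrow> 0"
    and F: "\<And>x. F x \<in> {0..1}" and G: "\<And>y. G y \<in> {0..1}"
    and inj: "\<And>n. inj_on xs {..<n}" "\<And>n. inj_on ys {..<n}"
    and within: "\<forall>\<^sub>F n in sequentially. emp_dfs_within n xs ys (\<lambda>x y. A (F x) (G y)) F G (t n)"
  shows "uniform_limit ({0..1} \<times> {0..1})
    (\<lambda>n p. bernstein_kernel (N n) (emp_copula n xs ys) (fst p) (snd p)) (\<lambda>p. K (fst p) (snd p)) sequentially"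
proof -
  have lim_A: "uniform_limit ({0..1} \<times> {0..1}) (\<lambda>n p. bernstein_kernel (N n) A (fst p) (snd p))
      (\<lambda>p. K (fst p) (snd p)) sequentially"
    using filterlim_compose[OF bernstein_kernel_uniform_limit[OF A K] N] .
  have lim_diff: "uniform_limit ({0..1} \<times> {0..1}) (\<lambda>n p. bernstein_kernel (N n) (emp_copula n xs ys) (fst p) (snd p)
      - bernstein_kernel (N n) A (fst p) (snd p)) (\<lambda>_. 0) sequentially"
  proof (rule uniform_limit_if_dist_le)
    show "(\<lambda>n. 6 * (real (N n) * (t n + 1 / real n))) \<longlonglongrightarrow> 0"
      using tendsto_mult_right_zero[OF rate] .
    show "\<forall>\<^sub>F n in sequentially. \<forall>p\<in>{0..1} \<times> {0..1}. dist (bernstein_kernel (N n) (emp_copula n xs ys) (fst p) (snd p)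
        - bernstein_kernel (N n) A (fst p) (snd p)) 0 \<le> 6 * (real (N n) * (t n + 1 / real n))"
      using within eventually_ge_at_top[of 1]
    proof eventually_elim
      case (elim n)
      have t: "0 \<le> t n" using elim(1) unfolding emp_dfs_within_def by (meson abs_ge_zero order_trans)
      have "\<bar>emp_copula n xs ys (real i / real (N n)) (real j / real (N n))
          - A (real i / real (N n)) (real j / real (N n))\<bar> \<le> 3 * t n + 2 / real n"
        if "i \<in> {1..N n}" "j \<in> {1..N n}" for i j
        using that by (intro emp_copula_dist_le[OF A elim(2) inj F G elim(1)]) auto
      then have bound: "\<bar>bernstein_kernel (N n) (\<lambda>u v. emp_copula n xs ys u v - A u v) x y\<bar>
          \<le> 2 * real (N n) * (3 * t n + 2 / real n)" if "x \<in> {0..1}" "y \<in> {0..1}" for x y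
        using that t by (intro abs_bernstein_kernel_le) simp_all
      have "3 * t n + 2 / real n \<le> 3 * (t n + 1 / real n)"
        by (simp add: distrib_left divide_right_mono)
      then have "2 * real (N n) * (3 * t n + 2 / real n) \<le> 2 * real (N n) * (3 * (t n + 1 / real n))"
        by (rule mult_left_mono) simp
      also have "\<dots> = 6 * (real (N n) * (t n + 1 / real n))" by simp
      finally have le: "2 * real (N n) * (3 * t n + 2 / real n) \<le> 6 * (real (N n) * (t n + 1 / real n))" .
      show ?case
      proof
        fix p :: "real \<times> real" assume "p \<in> {0..1} \<times> {0..1}"
        then have "\<bar>bernstein_kernel (N n) (\<lambda>u v. emp_copula n xs ys u v - A u v) (fst p) (snd p)\<bar>
            \<le> 2 * real (N n) * (3 * t n + 2 / real n)"
          by (intro bound) auto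
        then show "dist (bernstein_kernel (N n) (emp_copula n xs ys) (fst p) (snd p)
            - bernstein_kernel (N n) A (fst p) (snd p)) 0 \<le> 6 * (real (N n) * (t n + 1 / real n))"
          using le by (simp add: dist_real_def bernstein_kernel_diff)
      qed
    qed
  qed
  from uniform_limit_add[OF lim_A lim_diff] show ?thesis by simp
qed

lemma SUP_abs_diff_tendsto_0_if_uniform_limit:
  fixes f :: "nat \<Rightarrow> 'a \<Rightarrow> real"
  assumes "uniform_limit S f g sequentially" "S \<noteq> {}"
  shows "(\<lambda>n. SUP x\<in>S. \<bar>f n x - g x\<bar>) \<longlonglongrightarrow> 0"
proof (rule tendstoI)
  fix e :: real assume "e > 0"
  from uniform_limitD[OF assms(1) half_gt_zero[OF \<open>e > 0\<close>]]
  show "\<forall>\<^sub>F n in sequentially. dist (SUP x\<in>S. \<bar>f n x - g x\<bar>) 0 < e"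
  proof eventually_elim
    case (elim n)
    have "bdd_above ((\<lambda>x. \<bar>f n x - g x\<bar>) ` S)"
      using elim by (intro bdd_aboveI[of _ "e / 2"]) (auto simp: dist_real_def)
    moreover obtain x0 where "x0 \<in> S" using assms(2) by blast
    ultimately have "\<bar>f n x0 - g x0\<bar> \<le> (SUP x\<in>S. \<bar>f n x - g x\<bar>)" by (rule cSUP_upper2) simp
    moreover have "(SUP x\<in>S. \<bar>f n x - g x\<bar>) \<le> e / 2"
      using elim assms(2) by (intro cSUP_least) (auto simp: dist_real_def less_imp_le)
    ultimately show ?case using \<open>e > 0\<close> by (simp add: dist_real_def)
  qed
qed

lemma powr_rate_tendsto_0:
  fixes s s' :: real
  assumes "s < s'" "s < 1"
  shows "(\<lambda>n. real n powr s * (real n powr - s' + 3 / real n)) \<longlonglongrightarrow> 0"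
proof -
  have "(\<lambda>n. real n powr - (s' - s) + 3 * real n powr - (1 - s)) \<longlonglongrightarrow> 0 + 3 * 0"
    using assms by (intro tendsto_intros tendsto_neg_powr filterlim_real_sequentially) auto
  moreover have "\<forall>\<^sub>F n in sequentially.
      real n powr - (s' - s) + 3 * real n powr - (1 - s) = real n powr s * (real n powr - s' + 3 / real n)"
    using eventually_gt_at_top[of 0]
  proof eventually_elim
    case (elim n)
    have "real n powr s * real n powr - s' = real n powr - (s' - s)"
      by (simp flip: powr_add)
    moreover have "real n powr s / real n = real n powr - (1 - s)"
      using elim by (simp add: powr_diff)
    moreover have "real n powr s * (real n powr - s' + 3 / real n)
        = real n powr s * real n powr - s' + 3 * (real n powr s / real n)"
      by (simp add: algebra_simps)
    ultimately show ?case by simp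
  qed
  ultimately show ?thesis by (simp add: Lim_transform_eventually)
qed

lemma filterlim_nat_floor_powr:
  fixes s :: real
  assumes "s > 0"
  shows "filterlim (\<lambda>n. nat \<lfloor>real n powr s\<rfloor>) at_top sequentially"
proof -
  have "filterlim (\<lambda>n. real n powr s) at_top sequentially" using assms by real_asymp
  then show ?thesis
    by (intro filterlim_compose[OF filterlim_nat_sequentially] filterlim_compose[OF filterlim_floor_sequentially])
qed

lemma nat_floor_powr_rate_tendsto_0:
  fixes s s' :: real
  assumes "s < s'" "s < 1"
  shows "(\<lambda>n. real (nat \<lfloor>real n powr s\<rfloor>) * (real n powr - s' + 2 / real n + 1 / real n)) \<longlonglongrightarrow> 0"
proof (rule tendsto_sandwich[OF _ _ tendsto_const powr_rate_tendsto_0[OF assms]])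
  show "\<forall>\<^sub>F n in sequentially. real (nat \<lfloor>real n powr s\<rfloor>) * (real n powr - s' + 2 / real n + 1 / real n)
      \<le> real n powr s * (real n powr - s' + 3 / real n)"
    by (intro always_eventually allI mult_mono) simp_all
qed simp

theorem lemma4p2:
  fixes M :: "'a measure"
    and X Y :: "'a \<Rightarrow> real"
    and Xs Ys :: "nat \<Rightarrow> 'a \<Rightarrow> real"
    and A K :: "real \<Rightarrow> real \<Rightarrow> real"
    and s :: real
  assumes "prob_space M"
    and "(\<lambda>\<omega>. (X \<omega>, Y \<omega>)) \<in> borel_measurable M"
    and "prob_space.indep_vars M (\<lambda>_. borel) (\<lambda>i \<omega>. (Xs i \<omega>, Ys i \<omega>)) UNIV"
    and "\<And>i. distr M borel (\<lambda>\<omega>. (Xs i \<omega>, Ys i \<omega>)) = distr M borel (\<lambda>\<omega>. (X \<omega>, Y \<omega>))"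
    and "continuous_on UNIV (\<lambda>(x,y). measure M {\<omega>\<in>space M. X \<omega> \<le> x \<and> Y \<omega> \<le> y})"
    and "is_copula A"
    and "\<And>x y. measure M {\<omega>\<in>space M. X \<omega> \<le> x \<and> Y \<omega> \<le> y}
              = A (measure M {\<omega>\<in>space M. X \<omega> \<le> x}) (measure M {\<omega>\<in>space M. Y \<omega> \<le> y})"
    and "cont_markov_kernel A K"
    and "0 < s" "s < 1/2"
  shows "AE \<omega> in M.
    (\<lambda>n. SUP p\<in>{0..1} \<times> {0..1}.
        \<bar>bernstein_kernel (nat \<lfloor>real n powr s\<rfloor>)
            (emp_copula n (\<lambda>k. Xs k \<omega>) (\<lambda>k. Ys k \<omega>)) (fst p) (snd p) - K (fst p) (snd p)\<bar>)
    \<longlonglongrightarrow> 0"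
proof -
  interpret bivariate_sample M X Y Xs Ys
    using assms(1-5) by (simp add: bivariate_sample_def bivariate_sample_axioms_def)
  define s' where "s' = (s + 1/2) / 2"
  have s': "s < s'" "s' < 1/2" using assms(10) by (simp_all add: s'_def)
  define N where "N n = nat \<lfloor>real n powr s\<rfloor>" for n :: nat
  define t where "t n = real n powr - s' + 2 / real n" for n :: nat
  have N_lim: "filterlim N at_top sequentially"
    unfolding N_def using assms(9) by (rule filterlim_nat_floor_powr)
  have rate: "(\<lambda>n. real (N n) * (t n + 1 / real n)) \<longlonglongrightarrow> 0"
    unfolding N_def t_def using s' assms(10) by (intro nat_floor_powr_rate_tendsto_0) auto
  have copula: "(\<lambda>x y. prob {\<omega>\<in>space M. X \<omega> \<le> x \<and> Y \<omega> \<le> y}) = (\<lambda>x y. A (F x) (G y))"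
    using assms(7) by (simp add: F_def G_def)
  from ties_AE emp_dfs_within_AE[OF s'(2)] show ?thesis
  proof eventually_elim
    case (elim \<omega>)
    have "uniform_limit ({0..1} \<times> {0..1})
        (\<lambda>n p. bernstein_kernel (N n) (emp_copula n (\<lambda>k. Xs k \<omega>) (\<lambda>k. Ys k \<omega>)) (fst p) (snd p))
        (\<lambda>p. K (fst p) (snd p)) sequentially"
      using elim(1) elim(2)[folded t_def, unfolded copula]
      by (intro bernstein_emp_copula_uniform_limit[OF assms(6,8) N_lim rate F_in_unit G_in_unit])
        (auto intro: inj_onI)
    then show ?case unfolding N_def by (rule SUP_abs_diff_tendsto_0_if_uniform_limit) auto
  qed
qed

end
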